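(* Let $s$ be a degree sequence and let $U,U'\in\mathcal{U}(s)$. Then there exists a u-switch sequence transforming $U$ into $U'$; that is, there are 2-switches $\tau_1,\dots,\tau_k$ ($k\ge 0$) such that, with $U_0=U$ and $U_i=\tau_i(U_{i-1})$, each $\tau_i$ is a u-switch over $U_{i-1}$ and $U_k=U'$. In particular every intermediate graph $U_i$ is a unicyclic graph with degree sequence $s$.
   Context: All graphs are finite, simple, undirected and labeled, with vertex set $[n]=\{1,\dots,n\}$. The degree sequence of a graph $G$ with $V(G)=[n]$ is $s(G)=(d_1,\dots,d_n)$ where $d_i$ is the degree of vertex $i$; so two graphs have the same degree sequence iff every vertex has the same degree in both. A graph is unicyclic if it is connected and contains exactly one cycle; $\mathcal{U}(s)$ denotes the set of unicyclic graphs with degree sequence $s$. For $a,b,c,d\in[n]$, the matrix $A=\binom{a\ b}{c\ d}$ is interchangeable in $G$ if $ab,cd\in E(G)$, $\{a,b\}\cap\{c,d\}=\varnothing$ and $ac,bd\notin E(G)$. The 2-switch $\tau_A$ is the map sending $G$ to $G-ab-cd+ac+bd$ if $A$ is interchangeable in $G$, and to $G$ otherwise (in which case $\tau_A$ is trivial for $G$). A nontrivial 2-switch $\tau$ over a unicyclic graph $U$ is a u-switch if $\tau(U)$ is unicyclic. The empty sequence counts as a u-switch sequence. *)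

theory Defs
  imports Main
begin

text \<open>A simple graph on vertex set [n] = {1..n} is represented by its edge set,
  a set of 2-element subsets of {1..n}.\<close>

type_synonym graph = "nat set set"

definition simple_graph :: "nat \<Rightarrow> graph \<Rightarrow> bool" where
  "simple_graph n E \<longleftrightarrow> (\<forall>e\<in>E. e \<subseteq> {1..n} \<and> card e = 2)"

definition adj :: "graph \<Rightarrow> nat \<Rightarrow> nat \<Rightarrow> bool" where
  "adj E u v \<longleftrightarrow> {u, v} \<in> E"

definition degree :: "graph \<Rightarrow> nat \<Rightarrow> nat" where
  "degree E v = card {e \<in> E. v \<in> e}"

definition deg_seq :: "nat \<Rightarrow> graph \<Rightarrow> nat list" where
  "deg_seq n E = map (degree E) [1..<n+1]"

fun is_walk :: "graph \<Rightarrow> nat list \<Rightarrow> bool" where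
  "is_walk E [] = False"
| "is_walk E [v] = True"
| "is_walk E (u # v # vs) = (adj E u v \<and> is_walk E (v # vs))"

definition connected :: "nat \<Rightarrow> graph \<Rightarrow> bool" where
  "connected n E \<longleftrightarrow> (\<forall>u\<in>{1..n}. \<forall>v\<in>{1..n}.
      \<exists>p. is_walk E p \<and> hd p = u \<and> last p = v)"

definition cycle_edges :: "nat list \<Rightarrow> nat set set" where
  "cycle_edges vs = {{vs ! i, vs ! ((i + 1) mod length vs)} | i. i < length vs}"

definition is_cycle :: "graph \<Rightarrow> nat list \<Rightarrow> bool" where
  "is_cycle E vs \<longleftrightarrow> length vs \<ge> 3 \<and> distinct vs \<and> cycle_edges vs \<subseteq> E"

text \<open>Cycles of E as subgraphs (identified by their edge sets).\<close>
definition cycles :: "graph \<Rightarrow> nat set set set" where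
  "cycles E = {cycle_edges vs | vs. is_cycle E vs}"

definition unicyclic :: "nat \<Rightarrow> graph \<Rightarrow> bool" where
  "unicyclic n E \<longleftrightarrow> simple_graph n E \<and> connected n E \<and> (\<exists>!C. C \<in> cycles E)"

definition U_set :: "nat list \<Rightarrow> graph set" where
  "U_set s = {E. unicyclic (length s) E \<and> deg_seq (length s) E = s}"

text \<open>A 2-switch is given by a matrix (a b; c d), encoded as a 4-tuple.\<close>
definition interchangeable :: "graph \<Rightarrow> nat \<times> nat \<times> nat \<times> nat \<Rightarrow> bool" where
  "interchangeable E A = (case A of (a, b, c, d) \<Rightarrow>
      adj E a b \<and> adj E c d \<and> {a, b} \<inter> {c, d} = {} \<and> \<not> adj E a c \<and> \<not> adj E b d)"

definition two_switch :: "nat \<times> nat \<times> nat \<times> nat \<Rightarrow> graph \<Rightarrow> graph" where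
  "two_switch A E = (case A of (a, b, c, d) \<Rightarrow>
      if interchangeable E A then (E - {{a, b}, {c, d}}) \<union> {{a, c}, {b, d}} else E)"

definition u_switch :: "nat \<Rightarrow> nat \<times> nat \<times> nat \<times> nat \<Rightarrow> graph \<Rightarrow> bool" where
  "u_switch n A U \<longleftrightarrow> interchangeable U A \<and> unicyclic n (two_switch A U)"

fun apply_switches :: "(nat \<times> nat \<times> nat \<times> nat) list \<Rightarrow> graph \<Rightarrow> graph" where
  "apply_switches [] U = U"
| "apply_switches (A # As) U = apply_switches As (two_switch A U)"

fun u_switch_seq :: "nat \<Rightarrow> (nat \<times> nat \<times> nat \<times> nat) list \<Rightarrow> graph \<Rightarrow> bool" where
  "u_switch_seq n [] U = True"
| "u_switch_seq n (A # As) U = (u_switch n A U \<and> u_switch_seq n As (two_switch A U))"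

end

theory Submission
  imports Defs
begin

text \<open>On a fixed vertex set, a connected simple graph is unicyclic iff it has as many edges as
  vertices.  A 2-switch preserves all degrees and the number of edges, so it is a u-switch exactly
  when the switched graph is still connected; and u-reachability is symmetric, because the switch
  \<open>(a,c,b,d)\<close> undoes \<open>(a,b,c,d)\<close>.

  The proof is by induction on the number of vertices.  If \<open>v\<close> is a leaf (in both graphs, as the
  degrees agree) with neighbour \<open>x\<close> in \<open>G\<close> and \<open>w\<close> in \<open>H\<close>, a single u-switch in \<open>G\<close> or in \<open>H\<close> makes
  the two neighbours equal.  Then \<open>v\<close> is deleted from both graphs, the induction hypothesis is
  applied, and \<open>v\<close> is reattached, which commutes with the u-switches.  If there is no leaf, every
  degree is 2, so \<open>G\<close> and \<open>H\<close> are Hamiltonian cycles, and a suitable u-switch of \<open>G\<close> increases its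
  agreement with \<open>H\<close> (the number of common edges, then the component of a fixed vertex in
  \<open>G \<inter> H\<close>) until \<open>G = H\<close>.\<close>

section \<open>Graphs on an arbitrary vertex set\<close>

lemma two_le_cardE:
  assumes "finite A" "2 \<le> card A"
  obtains x y where "x \<in> A" "y \<in> A" "x \<noteq> y"
proof -
  have "\<not> card A \<le> Suc 0" using assms(2) by simp
  then show ?thesis using that card_le_Suc0_iff_eq[OF assms(1)] by blast
qed

definition simple_on :: "nat set \<Rightarrow> graph \<Rightarrow> bool" where
  "simple_on V E \<longleftrightarrow> (\<forall>e\<in>E. \<exists>a b. e = {a,b} \<and> a \<noteq> b \<and> a \<in> V \<and> b \<in> V)"

definition connected_on :: "nat set \<Rightarrow> graph \<Rightarrow> bool" where
  "connected_on V E \<longleftrightarrow> (\<forall>u\<in>V. \<forall>v\<in>V. (adj E)\<^sup>*\<^sup>* u v)"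

definition neighbours :: "graph \<Rightarrow> nat \<Rightarrow> nat set" where
  "neighbours E v = {u. {v,u} \<in> E}"

lemma in_neighbours_iff: "u \<in> neighbours E v \<longleftrightarrow> {v,u} \<in> E"
  by (simp add: neighbours_def)

lemma neighbours_singletonD: "neighbours E v = {x} \<Longrightarrow> {v,x} \<in> E"
  using in_neighbours_iff[of x E v] by simp

lemma in_neighbours_commute: "u \<in> neighbours E v \<longleftrightarrow> v \<in> neighbours E u"
  by (simp add: neighbours_def insert_commute)

lemma adj_rtranclp_sym: "(adj E)\<^sup>*\<^sup>* u v \<Longrightarrow> (adj E)\<^sup>*\<^sup>* v u"
  by (rule sympD[OF symp_rtranclp]) (auto intro: sympI simp: adj_def insert_commute)

lemma adj_rtranclp_mono: "E \<subseteq> F \<Longrightarrow> (adj E)\<^sup>*\<^sup>* u v \<Longrightarrow> (adj F)\<^sup>*\<^sup>* u v"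
  by (erule rtranclp_mono[THEN predicate2D, rotated]) (auto simp: adj_def)

lemma edge_adj_rtranclp: "{u,v} \<in> E \<Longrightarrow> (adj E)\<^sup>*\<^sup>* u v"
  by (simp add: adj_def r_into_rtranclp)

lemma adj_rtranclp_chain:
  assumes "\<And>t. t < n \<Longrightarrow> {f t, f (Suc t)} \<in> E"
  shows "(adj E)\<^sup>*\<^sup>* (f 0) (f n)"
  using assms
proof (induction n)
  case (Suc n)
  then show ?case by (simp add: adj_def rtranclp.rtrancl_into_rtrancl)
qed simp

lemma adj_rtranclp_first_step:
  assumes "(adj E)\<^sup>*\<^sup>* v u" "v \<noteq> u"
  obtains w where "w \<in> neighbours E v"
  using assms by (metis converse_rtranclpE adj_def in_neighbours_iff)

lemma adj_rtranclp_crossing_edge: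
  assumes "(adj E)\<^sup>*\<^sup>* r u" "r \<in> S" "u \<notin> S"
  obtains b y where "b \<in> S" "y \<notin> S" "{b,y} \<in> E"
  using assms(1,3)
proof (induction arbitrary: thesis rule: rtranclp_induct)
  case base then show ?case using assms(2) by simp
next
  case (step z w)
  then show ?case by (cases "z \<in> S") (auto simp: adj_def)
qed

lemma adj_rtranclp_avoid_edge:
  assumes "(adj E)\<^sup>*\<^sup>* r u" "\<And>t. (adj E)\<^sup>*\<^sup>* r t \<Longrightarrow> t \<noteq> y"
  shows "(adj (E - {{y,y'}}))\<^sup>*\<^sup>* r u"
  using assms(1)
proof (induction rule: rtranclp_induct)
  case (step z w)
  then have "z \<noteq> y" "w \<noteq> y" using assms(2) by (auto intro: rtranclp.rtrancl_into_rtrancl)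
  then have "adj (E - {{y,y'}}) z w" using step(2) by (auto simp: adj_def doubleton_eq_iff)
  then show ?case using step(3) by (meson rtranclp.rtrancl_into_rtrancl)
qed simp

lemma simple_on_edgeE:
  assumes "simple_on V E" "e \<in> E"
  obtains a b where "e = {a,b}" "a \<noteq> b" "a \<in> V" "b \<in> V"
  using assms unfolding simple_on_def by blast

lemma simple_on_doubleton: "simple_on V E \<Longrightarrow> {u,v} \<in> E \<Longrightarrow> u \<noteq> v \<and> u \<in> V \<and> v \<in> V"
  by (erule simple_on_edgeE) (auto simp: doubleton_eq_iff)

lemma simple_on_subset_Pow: "simple_on V E \<Longrightarrow> E \<subseteq> Pow V"
  unfolding simple_on_def by auto

lemma simple_on_finite: "finite V \<Longrightarrow> simple_on V E \<Longrightarrow> finite E"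
  by (metis simple_on_subset_Pow finite_Pow_iff finite_subset)

lemma simple_on_mono: "simple_on V E \<Longrightarrow> F \<subseteq> E \<Longrightarrow> simple_on V F"
  unfolding simple_on_def by auto

lemma neighbours_subset: "simple_on V E \<Longrightarrow> neighbours E v \<subseteq> V"
  unfolding neighbours_def using simple_on_doubleton by blast

lemma finite_neighbours: "finite V \<Longrightarrow> simple_on V E \<Longrightarrow> finite (neighbours E v)"
  by (rule finite_subset[OF neighbours_subset]) simp_all

lemma neighbour_neq: "simple_on V E \<Longrightarrow> u \<in> neighbours E v \<Longrightarrow> u \<noteq> v"
  using simple_on_doubleton by (metis in_neighbours_iff)

lemma degree_eq_card_neighbours:
  assumes "simple_on V E"
  shows "degree E v = card (neighbours E v)"
proof -
  have "{e \<in> E. v \<in> e} = (\<lambda>u. {v,u}) ` neighbours E v"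
  proof (intro equalityI subsetI)
    fix e assume e: "e \<in> {e \<in> E. v \<in> e}"
    then obtain a b where "e = {a,b}" by (auto elim: simple_on_edgeE[OF assms])
    then have "e = {v, if a = v then b else a}" using e by auto
    then show "e \<in> (\<lambda>u. {v,u}) ` neighbours E v" unfolding neighbours_def using e by blast
  qed (auto simp: neighbours_def)
  moreover have "inj_on (\<lambda>u. {v,u}) (neighbours E v)"
    by (rule inj_onI) (auto simp: doubleton_eq_iff)
  ultimately show ?thesis unfolding degree_def by (simp add: card_image)
qed

lemma degree_insert:
  assumes "finite E" "e \<notin> E"
  shows "degree (insert e E) u = degree E u + (if u \<in> e then 1 else 0)"
proof -
  have "{x \<in> insert e E. u \<in> x} = (if u \<in> e then insert e {x \<in> E. u \<in> x} else {x \<in> E. u \<in> x})"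
    by auto
  then show ?thesis unfolding degree_def using assms by simp
qed

lemma is_walk_adj_rtranclp: "is_walk E p \<Longrightarrow> (adj E)\<^sup>*\<^sup>* (hd p) (last p)"
  by (induction E p rule: is_walk.induct) (auto intro: converse_rtranclp_into_rtranclp)

lemma is_walk_conv_nth:
  "is_walk E p \<longleftrightarrow> p \<noteq> [] \<and> (\<forall>i. Suc i < length p \<longrightarrow> adj E (p!i) (p!Suc i))"
proof (induction E p rule: is_walk.induct)
  case (3 E u v vs)
  have "(\<forall>i. Suc i < length (u # v # vs) \<longrightarrow> adj E ((u # v # vs) ! i) ((u # v # vs) ! Suc i))
    \<longleftrightarrow> adj E u v \<and> (\<forall>i. Suc i < length (v # vs) \<longrightarrow> adj E ((v # vs) ! i) ((v # vs) ! Suc i))"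
    by (auto simp: less_Suc_eq_0_disj)
  then show ?case using 3 by simp
qed auto

lemma is_walk_appendD: "is_walk E (p @ q) \<Longrightarrow> q \<noteq> [] \<Longrightarrow> is_walk E q"
proof (induction p)
  case (Cons a p)
  then show ?case by (cases p; cases q) auto
qed auto

lemma is_walk_edge: "is_walk E p \<Longrightarrow> Suc i < length p \<Longrightarrow> {p!i, p!Suc i} \<in> E"
  by (simp add: is_walk_conv_nth adj_def)

lemma adj_rtranclp_distinct_walk:
  assumes "(adj E)\<^sup>*\<^sup>* a b"
  obtains p where "is_walk E p" "distinct p" "hd p = a" "last p = b"
  using assms
proof (induction arbitrary: thesis rule: converse_rtranclp_induct)
  case base
  then show ?case by (metis distinct_singleton is_walk.simps(2) last.simps list.sel(1))
next
  case (step a a1)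
  obtain p where p: "is_walk E p" "distinct p" "hd p = a1" "last p = b" using step.IH by blast
  then obtain p' where pp: "p = a1 # p'" by (cases p) auto
  show ?case
  proof (cases "a \<in> set p")
    case False
    then show ?thesis using step p pp by (intro step.prems[of "a # p"]) auto
  next
    case True
    then obtain q1 q2 where q: "p = q1 @ a # q2" by (meson split_list)
    have "last (a # q2) = b" using p(4) q by (metis last_appendR list.simps(3))
    then show ?thesis using step.prems[of "a # q2"] is_walk_appendD p(1,2) q by force
  qed
qed

lemma walk_adj_rtranclp_within:
  assumes "p \<noteq> []" "\<And>i. Suc i < length p \<Longrightarrow> {p!i, p!Suc i} \<in> F"
  shows "(adj F)\<^sup>*\<^sup>* (hd p) (last p)"
  using adj_rtranclp_chain[of "length p - 1" "(!) p" F] assms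
  by (simp add: hd_conv_nth last_conv_nth)

lemma distinct_walk_inner_neighbours:
  assumes "is_walk E p" "distinct p" "0 < j" "Suc j < length p"
  shows "p!(j-1) \<in> neighbours E (p!j)" "p!Suc j \<in> neighbours E (p!j)" "p!(j-1) \<noteq> p!Suc j"
proof -
  show "p!(j-1) \<in> neighbours E (p!j)"
    using is_walk_edge[OF assms(1), of "j - 1"] assms(3,4) by (simp add: in_neighbours_iff insert_commute)
  show "p!Suc j \<in> neighbours E (p!j)"
    using is_walk_edge[OF assms(1,4)] by (simp add: in_neighbours_iff)
  show "p!(j-1) \<noteq> p!Suc j"
    using nth_eq_iff_index_eq[OF assms(2)] assms(3,4) by simp
qed

lemma connected_iff_connected_on: "connected n E \<longleftrightarrow> connected_on {1..n} E"
  unfolding connected_def connected_on_def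
proof (intro ball_cong refl iffI)
  fix u v assume "\<exists>p. is_walk E p \<and> hd p = u \<and> last p = v"
  then show "(adj E)\<^sup>*\<^sup>* u v" using is_walk_adj_rtranclp by blast
next
  fix u v assume "(adj E)\<^sup>*\<^sup>* u v"
  then show "\<exists>p. is_walk E p \<and> hd p = u \<and> last p = v" by (metis adj_rtranclp_distinct_walk)
qed

lemma simple_graph_iff_simple_on: "simple_graph n E \<longleftrightarrow> simple_on {1..n} E"
proof -
  have "e \<subseteq> {1..n} \<and> card e = 2 \<longleftrightarrow> (\<exists>a b. e = {a,b} \<and> a \<noteq> b \<and> a \<in> {1..n} \<and> b \<in> {1..n})" for e
    unfolding card_2_iff by blast
  then show ?thesis unfolding simple_graph_def simple_on_def by simp
qed

section \<open>Edge counts, cycles and unicyclic graphs\<close>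

lemma sum_degree_eq_sum_card_inter:
  assumes "finite B" "finite E"
  shows "(\<Sum>u\<in>B. degree E u) = (\<Sum>e\<in>E. card (e \<inter> B))"
proof -
  have "degree E u = (\<Sum>e\<in>E. if u \<in> e then 1 else 0)" for u
    unfolding degree_def using assms(2) by (simp add: sum.inter_filter[symmetric])
  moreover have "card (e \<inter> B) = (\<Sum>u\<in>B. if u \<in> e then 1 else 0)" for e
    using assms(1) by (simp add: sum.inter_filter[symmetric] Int_def conj_commute)
  ultimately show ?thesis by (simp add: sum.swap[of _ B])
qed

lemma sum_degree_eq_twice_card:
  assumes "finite V" "simple_on V E"
  shows "(\<Sum>u\<in>V. degree E u) = 2 * card E"
proof -
  have "(\<Sum>u\<in>V. degree E u) = (\<Sum>e\<in>E. card (e \<inter> V))"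
    using sum_degree_eq_sum_card_inter assms simple_on_finite by blast
  also have "\<dots> = (\<Sum>e\<in>E. 2)"
    by (rule sum.cong) (auto elim: simple_on_edgeE[OF assms(2)])
  finally show ?thesis by simp
qed

lemma degree_one_neighbours:
  assumes "simple_on V E" "degree E v = 1"
  obtains x where "neighbours E v = {x}"
proof -
  have "card (neighbours E v) = 1" using assms degree_eq_card_neighbours by metis
  then show ?thesis using that by (auto simp: card_1_singleton_iff)
qed

lemma connected_on_degree_pos:
  assumes "finite V" "simple_on V E" "connected_on V E" "u \<in> V" "v \<in> V" "u \<noteq> v"
  shows "0 < degree E v"
proof -
  obtain w where "w \<in> neighbours E v"
    using assms(3-6) adj_rtranclp_first_step unfolding connected_on_def by metis
  then show ?thesis
    using finite_neighbours[OF assms(1,2)] degree_eq_card_neighbours[OF assms(2)] card_gt_0_iff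
    by fastforce
qed

lemma leaf_incident_edges:
  assumes "simple_on V E" "neighbours E v = {x}"
  shows "{e \<in> E. v \<in> e} = {{v,x}}"
proof -
  have "e = {v,x}" if "e \<in> E" "v \<in> e" for e
  proof -
    obtain a b where "e = {a,b}" using simple_on_edgeE[OF assms(1) \<open>e \<in> E\<close>] by blast
    then have e: "e = {v, if a = v then b else a}" using that(2) by auto
    then have "(if a = v then b else a) \<in> neighbours E v" using that(1) by (simp add: in_neighbours_iff)
    then show ?thesis using e assms(2) by simp
  qed
  moreover have "{v,x} \<in> E" using assms(2) by (rule neighbours_singletonD)
  ultimately show ?thesis by blast
qed

lemma simple_on_remove_vertex:
  assumes "simple_on V E" "\<forall>e\<in>E. v \<notin> e"
  shows "simple_on (V - {v}) E"
  unfolding simple_on_def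
proof
  fix e assume "e \<in> E"
  then obtain a b where ab: "e = {a,b}" "a \<noteq> b" "a \<in> V" "b \<in> V" by (rule simple_on_edgeE[OF assms(1)])
  then have "a \<in> V - {v}" "b \<in> V - {v}" using assms(2) \<open>e \<in> E\<close> by auto
  then show "\<exists>a b. e = {a,b} \<and> a \<noteq> b \<and> a \<in> V - {v} \<and> b \<in> V - {v}"
    using ab(1,2) by blast
qed

lemma simple_on_remove_leaf:
  assumes "simple_on V E" "neighbours E v = {x}"
  shows "simple_on (V - {v}) (E - {{v,x}})"
proof (rule simple_on_remove_vertex)
  show "simple_on V (E - {{v,x}})" using assms(1) by (rule simple_on_mono) blast
  show "\<forall>e\<in>E - {{v,x}}. v \<notin> e" using leaf_incident_edges[OF assms] by blast
qed

lemma connected_on_remove_leaf: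
  assumes "simple_on V E" "connected_on V E" "neighbours E v = {x}"
  shows "connected_on (V - {v}) (E - {{v,x}})"
proof -
  have xv: "x \<noteq> v" using assms(1,3) neighbour_neq by blast
  have "(w \<noteq> v \<longrightarrow> (adj (E - {{v,x}}))\<^sup>*\<^sup>* u w) \<and> (w = v \<longrightarrow> (adj (E - {{v,x}}))\<^sup>*\<^sup>* u x)"
    if "(adj E)\<^sup>*\<^sup>* u w" "u \<noteq> v" for u w
    using that(1)
  proof (induction rule: rtranclp_induct)
    case (step z w)
    have zw: "{z,w} \<in> E" using step(2) by (simp add: adj_def)
    have "w = x" if "z = v" using zw that assms(3) in_neighbours_iff[of w E v] by simp
    moreover have "z = x" if "w = v"
      using zw that assms(3) in_neighbours_iff[of z E v] by (simp add: insert_commute)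
    moreover have "z \<noteq> v \<Longrightarrow> w \<noteq> v \<Longrightarrow> adj (E - {{v,x}}) z w"
      using zw by (auto simp: adj_def doubleton_eq_iff)
    ultimately show ?case using step(3) xv by (auto intro: rtranclp.rtrancl_into_rtrancl)
  qed (use that in simp)
  then show ?thesis using assms(2) unfolding connected_on_def by blast
qed

lemma connected_card_le:
  assumes "finite V" "V \<noteq> {}" "simple_on V E" "connected_on V E"
  shows "card V \<le> card E + 1"
  using assms
proof (induction "card V" arbitrary: V E rule: less_induct)
  case less
  have fE: "finite E" using simple_on_finite less by blast
  show ?case
  proof (cases "\<exists>v\<in>V. degree E v = 1")
    case True
    then obtain v x where v: "v \<in> V" "neighbours E v = {x}"
      using degree_one_neighbours[OF less(4)] by metis
    have xE: "{v,x} \<in> E" using v(2) by (rule neighbours_singletonD)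
    have "card (V - {v}) \<le> card (E - {{v,x}}) + 1"
    proof (rule less(1))
      show "card (V - {v}) < card V" using less(2) v(1) by (rule card_Diff1_less)
      show "V - {v} \<noteq> {}" using simple_on_doubleton[OF less(4) xE] by blast
    qed (use less(2) simple_on_remove_leaf[OF less(4) v(2)]
        connected_on_remove_leaf[OF less(4,5) v(2)] in auto)
    moreover have "card (V - {v}) = card V - 1" "card (E - {{v,x}}) = card E - 1"
      using v(1) xE by (simp_all add: card_Diff_singleton)
    moreover have "0 < card E" "0 < card V" using fE xE less(2) v(1) card_gt_0_iff by blast+
    ultimately show ?thesis by linarith
  next
    case False
    show ?thesis
    proof (cases "card V = 1")
      case False
      then have "\<not> card V \<le> Suc 0" using less(2,3) by (simp add: le_Suc_eq)
      then obtain u v where "u \<in> V" "v \<in> V" "u \<noteq> v"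
        using card_le_Suc0_iff_eq[OF less(2)] by blast
      then have "v \<in> V \<Longrightarrow> 0 < degree E v" for v
        using connected_on_degree_pos[OF less(2,4,5)] by metis
      then have "(\<Sum>u\<in>V. 2) \<le> (\<Sum>u\<in>V. degree E u)"
        using \<open>\<not> (\<exists>v\<in>V. degree E v = 1)\<close> by (intro sum_mono) fastforce
      then show ?thesis using sum_degree_eq_twice_card[OF less(2,4)] by simp
    qed simp
  qed
qed

lemma is_cycle_mono: "is_cycle F vs \<Longrightarrow> F \<subseteq> E \<Longrightarrow> is_cycle E vs"
  unfolding is_cycle_def by auto

lemma distinct_walk_closing_cycle:
  assumes "is_walk E p" "distinct p" "2 \<le> j" "j < length p" "{p!j, p!0} \<in> E"
  shows "is_cycle E (take (Suc j) p)"
  unfolding is_cycle_def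
proof (intro conjI)
  let ?vs = "take (Suc j) p"
  have len: "length ?vs = Suc j" using assms(4) by simp
  show "cycle_edges ?vs \<subseteq> E" unfolding cycle_edges_def
  proof clarify
    fix i assume "i < length ?vs"
    then consider "i < j" | "i = j" using len by linarith
    then show "{?vs ! i, ?vs ! ((i + 1) mod length ?vs)} \<in> E"
    proof cases
      case 1
      then show ?thesis using is_walk_edge[OF assms(1), of i] assms(4) len by simp
    next
      case 2
      then show ?thesis using assms(5) len by simp
    qed
  qed
qed (use assms in auto)

lemma min_degree_two_has_cycle:
  assumes "finite V" "V \<noteq> {}" "simple_on V E" "\<forall>v\<in>V. 2 \<le> degree E v"
  obtains vs where "is_cycle E vs"
proof -
  define P where "P = (\<lambda>p. is_walk E p \<and> distinct p \<and> set p \<subseteq> V)"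
  obtain v0 where v0: "v0 \<in> V" using assms(2) by blast
  have "length p < card V + 1" if "P p" for p
  proof -
    have "card (set p) \<le> card V" "card (set p) = length p"
      using that card_mono[OF assms(1)] distinct_card unfolding P_def by auto
    then show ?thesis by simp
  qed
  then obtain p where p: "P p" and longest: "\<forall>q. P q \<longrightarrow> length q \<le> length p"
    using ex_has_greatest_nat[of P "[v0]" length "card V + 1"] v0 unfolding P_def by auto
  then obtain u rest where pu: "p = u # rest" unfolding P_def by (cases p) auto
  have uV: "u \<in> V" using p pu unfolding P_def by simp
  have in_p: "z \<in> set p" if "z \<in> neighbours E u" for z
  proof (rule ccontr)
    assume "z \<notin> set p"
    moreover have "z \<in> V" using that neighbours_subset[OF assms(3)] by blast
    moreover have "is_walk E (z # p)"
      using p pu that unfolding P_def by (auto simp: in_neighbours_iff adj_def insert_commute)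
    ultimately have "P (z # p)" using p unfolding P_def by simp
    then show False using longest by fastforce
  qed
  have "2 \<le> card (neighbours E u)" using assms(4) uV degree_eq_card_neighbours[OF assms(3)] by simp
  then obtain z1 z2 where z: "z1 \<in> neighbours E u" "z2 \<in> neighbours E u" "z1 \<noteq> z2"
    using two_le_cardE[OF finite_neighbours[OF assms(1,3)]] by blast
  obtain j1 j2 where j: "j1 < length p" "p ! j1 = z1" "j2 < length p" "p ! j2 = z2"
    using in_p z by (meson in_set_conv_nth)
  have "j1 \<noteq> 0" "j2 \<noteq> 0" using j z(1,2) pu by (metis nth_Cons_0 neighbour_neq[OF assms(3)])+
  then obtain j where j: "2 \<le> j" "j < length p" "p ! j \<in> neighbours E u"
    using j z by (metis One_nat_def less_2_cases not_less)
  then have "{p ! j, p ! 0} \<in> E" using pu by (simp add: in_neighbours_iff insert_commute)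
  then have "is_cycle E (take (Suc j) p)"
    using p j(1,2) distinct_walk_closing_cycle unfolding P_def by blast
  then show ?thesis using that by blast
qed

lemma acyclic_card_le:
  assumes "finite V" "V \<noteq> {}" "simple_on V E" "\<And>vs. \<not> is_cycle E vs"
  shows "card E + 1 \<le> card V"
  using assms
proof (induction "card V" arbitrary: V E rule: less_induct)
  case less
  have fE: "finite E" using simple_on_finite less by blast
  consider v where "v \<in> V" "degree E v = 0" | v where "v \<in> V" "degree E v = 1"
    | "\<forall>v\<in>V. 2 \<le> degree E v"
    by (metis One_nat_def less_2_cases not_less)
  then show ?case
  proof cases
    case (1 v)
    show ?thesis
    proof (cases "V = {v}")
      case True
      then have "E = {}" using less(4) by (auto elim: simple_on_edgeE)
      then show ?thesis using True by simp
    next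
      case False
      have "\<forall>e\<in>E. v \<notin> e" using 1 fE unfolding degree_def by simp
      have "card E + 1 \<le> card (V - {v})"
      proof (rule less(1))
        show "card (V - {v}) < card V" using less(2) 1(1) by (rule card_Diff1_less)
        show "simple_on (V - {v}) E" using less(4) \<open>\<forall>e\<in>E. v \<notin> e\<close> by (rule simple_on_remove_vertex)
      qed (use less(2,5) False 1(1) in auto)
      then show ?thesis using less(2) 1 by (simp add: card_Diff_singleton)
    qed
  next
    case (2 v)
    then obtain x where x: "neighbours E v = {x}" using degree_one_neighbours[OF less(4)] by metis
    have xE: "{v,x} \<in> E" using x by (rule neighbours_singletonD)
    have "card (E - {{v,x}}) + 1 \<le> card (V - {v})"
    proof (rule less(1))
      show "card (V - {v}) < card V" using less(2) 2(1) by (rule card_Diff1_less)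
      show "V - {v} \<noteq> {}" using simple_on_doubleton[OF less(4) xE] by blast
      show "\<not> is_cycle (E - {{v,x}}) vs" for vs using less(5) is_cycle_mono by blast
    qed (use less(2) simple_on_remove_leaf[OF less(4) x] in auto)
    moreover have "card (V - {v}) = card V - 1" "card (E - {{v,x}}) = card E - 1"
      using 2(1) xE by (simp_all add: card_Diff_singleton)
    moreover have "0 < card E" using fE xE card_gt_0_iff by blast
    ultimately show ?thesis by linarith
  next
    case 3
    then show ?thesis using min_degree_two_has_cycle[OF less(2-4)] less(5) by blast
  qed
qed

lemma cycle_edge_index_eq:
  assumes "is_cycle E vs" "i < length vs" "j < length vs"
    and "{vs!i, vs!((i+1) mod length vs)} = {vs!j, vs!((j+1) mod length vs)}"
  shows "i = j"
proof (rule ccontr)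
  assume "i \<noteq> j"
  let ?L = "length vs"
  have L: "?L \<ge> 3" and "distinct vs" using assms(1) unfolding is_cycle_def by auto
  then have inj: "vs!a = vs!b \<Longrightarrow> a < ?L \<Longrightarrow> b < ?L \<Longrightarrow> a = b" for a b
    using nth_eq_iff_index_eq by blast
  have "vs \<noteq> []" using assms(2) by auto
  then have "(j+1) mod ?L < ?L" "(i+1) mod ?L < ?L" by simp_all
  moreover have "vs!i = vs!((j+1) mod ?L)" "vs!((i+1) mod ?L) = vs!j"
    using assms(4) inj[of i j] assms(2,3) \<open>i \<noteq> j\<close> by (auto simp: doubleton_eq_iff)
  ultimately have "i = (j+1) mod ?L" "j = (i+1) mod ?L"
    using inj assms(2,3) by (metis, metis)
  then show False using \<open>?L \<ge> 3\<close> assms(2,3) by (auto simp: mod_if split: if_splits)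
qed

text \<open>Walking once around the cycle, starting after the edge \<open>e\<close>, avoids \<open>e\<close>.\<close>
lemma cycle_edge_not_bridge:
  assumes "is_cycle E vs" "i < length vs"
  defines "e \<equiv> {vs!i, vs!((i+1) mod length vs)}"
  shows "(adj (E - {e}))\<^sup>*\<^sup>* (vs!((i+1) mod length vs)) (vs!i)"
proof -
  let ?L = "length vs"
  define f where "f t = vs!((i+1+t) mod ?L)" for t
  have "{f t, f (Suc t)} \<in> E - {e}" if "t < ?L - 1" for t
  proof -
    let ?j = "(i+1+t) mod ?L"
    have L: "vs \<noteq> []" using assms(2) by auto
    have f: "f t = vs!?j" "f (Suc t) = vs!((?j+1) mod ?L)"
      unfolding f_def by (simp_all add: mod_Suc_eq)
    then have "{f t, f (Suc t)} \<in> cycle_edges vs" unfolding cycle_edges_def using L by auto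
    moreover have "?j \<noteq> i"
    proof
      assume "?j = i"
      then show False using that assms(2)
        by (cases "i + 1 + t < ?L") (auto simp: mod_if split: if_splits)
    qed
    then have "{f t, f (Suc t)} \<noteq> e"
      using cycle_edge_index_eq[OF assms(1,2), of ?j] f L unfolding e_def by auto
    ultimately show ?thesis using assms(1) unfolding is_cycle_def by auto
  qed
  moreover have "f 0 = vs!((i+1) mod ?L)" unfolding f_def by simp
  moreover have "i + 1 + (?L - 1) = i + ?L" using assms(2) by simp
  then have "f (?L - 1) = vs!i" unfolding f_def using assms(2) by simp
  ultimately show ?thesis using adj_rtranclp_chain[of "?L - 1" f] by metis
qed

lemma connected_on_remove_edge:
  assumes "connected_on V E" "(adj (E - {{p,q}}))\<^sup>*\<^sup>* p q"
  shows "connected_on V (E - {{p,q}})"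
proof -
  have "(adj (E - {{p,q}}))\<^sup>*\<^sup>* a b" if "(adj E)\<^sup>*\<^sup>* a b" for a b
    using that
  proof (induction rule: rtranclp_induct)
    case (step y z)
    show ?case
    proof (cases "{y,z} = {p,q}")
      case True
      then have "(adj (E - {{p,q}}))\<^sup>*\<^sup>* y z"
        using assms(2) adj_rtranclp_sym by (auto simp: doubleton_eq_iff)
      then show ?thesis using step(3) by (meson rtranclp_trans)
    next
      case False
      then have "adj (E - {{p,q}}) y z" using step(2) by (simp add: adj_def)
      then show ?thesis using step(3) by (meson rtranclp.rtrancl_into_rtrancl)
    qed
  qed simp
  then show ?thesis using assms(1) unfolding connected_on_def by blast
qed

lemma connected_on_remove_cycle_edge:
  assumes "connected_on V E" "is_cycle E vs" "e \<in> cycle_edges vs"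
  shows "connected_on V (E - {e})"
proof -
  obtain i where i: "i < length vs" "e = {vs!((i+1) mod length vs), vs!i}"
    using assms(3) unfolding cycle_edges_def by (auto simp: insert_commute)
  have "(adj (E - {e}))\<^sup>*\<^sup>* (vs!((i+1) mod length vs)) (vs!i)"
    using cycle_edge_not_bridge[OF assms(2) i(1)] i(2) by (simp add: insert_commute)
  then show ?thesis using connected_on_remove_edge[OF assms(1)] i(2) by blast
qed

lemma cycle_edges_first: "is_cycle E vs \<Longrightarrow> {vs!0, vs!1} \<in> cycle_edges vs"
  unfolding cycle_edges_def is_cycle_def by (intro CollectI exI[of _ 0]) auto

lemma cycle_edges_subset: "is_cycle E vs \<Longrightarrow> cycle_edges vs \<subseteq> E"
  unfolding is_cycle_def by simp

lemma two_cycles_card_le: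
  assumes "finite V" "V \<noteq> {}" "simple_on V E" "connected_on V E"
    and "is_cycle E vs1" "is_cycle E vs2" "e \<in> cycle_edges vs1" "e \<notin> cycle_edges vs2"
  shows "card V + 1 \<le> card E"
proof -
  define f where "f = {vs2!0, vs2!1}"
  have cycle2: "is_cycle (E - {e}) vs2" using assms(6,8) unfolding is_cycle_def by auto
  have f: "f \<in> cycle_edges vs2" unfolding f_def using cycle_edges_first[OF assms(6)] .
  have e: "e \<in> E" using cycle_edges_subset[OF assms(5)] assms(7) by blast
  have f': "f \<in> E - {e}" using cycle_edges_subset[OF cycle2] f by blast
  have "connected_on V (E - {e} - {f})"
    using connected_on_remove_cycle_edge[OF connected_on_remove_cycle_edge[OF assms(4,5,7)] cycle2 f] .
  moreover have "simple_on V (E - {e} - {f})" by (rule simple_on_mono[OF assms(3)]) auto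
  ultimately have "card V \<le> card (E - {e} - {f}) + 1" using connected_card_le[OF assms(1,2)] by blast
  moreover have "card (E - {e} - {f}) = card E - 2"
    using e f' simple_on_finite[OF assms(1,3)] by (simp add: card_Diff_singleton)
  moreover have "2 \<le> card E"
  proof -
    have "e \<noteq> f" using f' by blast
    then show ?thesis using card_mono[OF simple_on_finite[OF assms(1,3)], of "{e,f}"] e f' by simp
  qed
  ultimately show ?thesis by linarith
qed

lemma unique_cycle_iff_card_eq:
  assumes "finite V" "V \<noteq> {}" "simple_on V E" "connected_on V E"
  shows "(\<exists>!C. C \<in> cycles E) \<longleftrightarrow> card E = card V"
proof
  assume unique: "\<exists>!C. C \<in> cycles E"
  then obtain vs where vs: "is_cycle E vs" unfolding cycles_def by blast
  define e where "e = {vs!0, vs!1}"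
  have e: "e \<in> cycle_edges vs" "e \<in> E"
    unfolding e_def using cycle_edges_first[OF vs] cycle_edges_subset[OF vs] by blast+
  have simple: "simple_on V (E - {e})" by (rule simple_on_mono[OF assms(3)]) auto
  have "card V \<le> card (E - {e}) + 1"
    using connected_card_le[OF assms(1,2) simple connected_on_remove_cycle_edge[OF assms(4) vs e(1)]] .
  moreover have "card (E - {e}) + 1 \<le> card V"
  proof (rule acyclic_card_le[OF assms(1,2) simple])
    show "\<not> is_cycle (E - {e}) vs'" for vs'
    proof
      assume cycle: "is_cycle (E - {e}) vs'"
      then have "cycle_edges vs' = cycle_edges vs"
        using unique vs is_cycle_mono[OF cycle] unfolding cycles_def by blast
      then show False using e(1) cycle_edges_subset[OF cycle] by blast
    qed
  qed
  moreover have "card (E - {e}) = card E - 1" using e(2) by (simp add: card_Diff_singleton)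
  moreover have "0 < card E" using e(2) simple_on_finite[OF assms(1,3)] card_gt_0_iff by blast
  ultimately show "card E = card V" by linarith
next
  assume card: "card E = card V"
  obtain vs where vs: "is_cycle E vs"
    using acyclic_card_le[OF assms(1-3)] card by fastforce
  have "C = cycle_edges vs" if C: "C \<in> cycles E" for C
  proof (rule ccontr)
    assume "C \<noteq> cycle_edges vs"
    moreover obtain vs2 where "C = cycle_edges vs2" "is_cycle E vs2"
      using C unfolding cycles_def by blast
    ultimately have "card V + 1 \<le> card E"
      using two_cycles_card_le[OF assms _ vs] two_cycles_card_le[OF assms vs] by blast
    then show False using card by simp
  qed
  moreover have "cycle_edges vs \<in> cycles E" unfolding cycles_def using vs by blast
  ultimately show "\<exists>!C. C \<in> cycles E" by blast
qed

text \<open>Unicyclicity on an arbitrary finite vertex set, in the form given by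
  \<open>unique_cycle_iff_card_eq\<close>.\<close>
definition unicyclic_on :: "nat set \<Rightarrow> graph \<Rightarrow> bool" where
  "unicyclic_on V E \<longleftrightarrow> finite V \<and> V \<noteq> {} \<and> simple_on V E \<and> connected_on V E \<and> card E = card V"

lemma unicyclic_iff_unicyclic_on: "unicyclic n E \<longleftrightarrow> unicyclic_on {1..n} E"
proof
  assume "unicyclic n E"
  then have simple: "simple_on {1..n} E" and "connected_on {1..n} E" "\<exists>!C. C \<in> cycles E"
    unfolding unicyclic_def by (auto simp: simple_graph_iff_simple_on connected_iff_connected_on)
  moreover obtain vs where vs: "is_cycle E vs" using \<open>\<exists>!C. C \<in> cycles E\<close> unfolding cycles_def by blast
  then have "{vs!0, vs!1} \<in> E" using cycle_edges_first cycle_edges_subset by blast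
  then have "{1..n} \<noteq> {}" using simple_on_doubleton[OF simple] by blast
  ultimately show "unicyclic_on {1..n} E"
    unfolding unicyclic_on_def using unique_cycle_iff_card_eq[of "{1..n}" E] by simp
next
  assume "unicyclic_on {1..n} E"
  then show "unicyclic n E"
    using unique_cycle_iff_card_eq[of "{1..n}" E]
    unfolding unicyclic_on_def unicyclic_def simple_graph_iff_simple_on connected_iff_connected_on
    by simp
qed

lemma unicyclic_on_unique_cycle:
  assumes "unicyclic_on V G" "is_cycle G vs1" "is_cycle G vs2"
  shows "cycle_edges vs1 = cycle_edges vs2"
  using assms unique_cycle_iff_card_eq[of V G] unfolding unicyclic_on_def cycles_def by blast

section \<open>u-switches\<close>

definition u_switch_on :: "nat set \<Rightarrow> nat \<times> nat \<times> nat \<times> nat \<Rightarrow> graph \<Rightarrow> bool" where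
  "u_switch_on V A E \<longleftrightarrow> interchangeable E A \<and> unicyclic_on V (two_switch A E)"

fun u_switch_seq_on :: "nat set \<Rightarrow> (nat \<times> nat \<times> nat \<times> nat) list \<Rightarrow> graph \<Rightarrow> bool" where
  "u_switch_seq_on V [] E = True"
| "u_switch_seq_on V (A # As) E = (u_switch_on V A E \<and> u_switch_seq_on V As (two_switch A E))"

definition u_reachable :: "nat set \<Rightarrow> graph \<Rightarrow> graph \<Rightarrow> bool" where
  "u_reachable V G H \<longleftrightarrow> (\<exists>As. u_switch_seq_on V As G \<and> apply_switches As G = H)"

lemma u_switch_seq_on_iff: "u_switch_seq_on {1..n} As E = u_switch_seq n As E"
  by (induction As arbitrary: E) (auto simp: u_switch_on_def u_switch_def unicyclic_iff_unicyclic_on)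

lemma u_reachable_refl: "u_reachable V G G"
  unfolding u_reachable_def by (rule exI[of _ "[]"]) simp

lemma u_reachable_step: "u_switch_on V A G \<Longrightarrow> u_reachable V (two_switch A G) H \<Longrightarrow> u_reachable V G H"
  unfolding u_reachable_def by (metis apply_switches.simps(2) u_switch_seq_on.simps(2))

lemma u_reachable_trans:
  assumes "u_reachable V G H" "u_reachable V H K"
  shows "u_reachable V G K"
proof -
  have "u_switch_seq_on V As G \<Longrightarrow> u_reachable V (apply_switches As G) K \<Longrightarrow> u_reachable V G K" for As
    by (induction As arbitrary: G) (auto intro: u_reachable_step)
  then show ?thesis using assms unfolding u_reachable_def by blast
qed

lemma interchangeable_iff:
  "interchangeable E (a,b,c,d) \<longleftrightarrow> {a,b} \<in> E \<and> {c,d} \<in> E \<and> a \<noteq> c \<and> a \<noteq> d \<and> b \<noteq> c \<and> b \<noteq> d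
     \<and> {a,c} \<notin> E \<and> {b,d} \<notin> E"
  unfolding interchangeable_def adj_def by auto

lemma two_switch_eq:
  "interchangeable E (a,b,c,d) \<Longrightarrow> two_switch (a,b,c,d) E = (E - {{a,b},{c,d}}) \<union> {{a,c},{b,d}}"
  unfolding two_switch_def by simp

lemma interchangeable_vertices:
  assumes "simple_on V E" "interchangeable E (a,b,c,d)"
  shows "a \<noteq> b" "c \<noteq> d" "a \<in> V" "b \<in> V" "c \<in> V" "d \<in> V"
  using simple_on_doubleton[OF assms(1)] assms(2) unfolding interchangeable_iff by blast+

lemma two_switch_decomp:
  assumes "simple_on V E" "interchangeable E (a,b,c,d)"
  defines "E0 \<equiv> E - {{a,b},{c,d}}"
  shows "E = insert {a,b} (insert {c,d} E0)" "two_switch (a,b,c,d) E = insert {a,c} (insert {b,d} E0)"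
    "{a,b} \<notin> insert {c,d} E0" "{c,d} \<notin> E0" "{a,c} \<notin> insert {b,d} E0" "{b,d} \<notin> E0"
proof -
  have i: "{a,b} \<in> E" "{c,d} \<in> E" "a \<noteq> c" "a \<noteq> d" "b \<noteq> c" "b \<noteq> d" "{a,c} \<notin> E" "{b,d} \<notin> E"
    using assms(2) unfolding interchangeable_iff by auto
  show "E = insert {a,b} (insert {c,d} E0)" unfolding E0_def using i by auto
  show "two_switch (a,b,c,d) E = insert {a,c} (insert {b,d} E0)"
    unfolding two_switch_eq[OF assms(2)] E0_def by auto
  show "{a,b} \<notin> insert {c,d} E0" "{c,d} \<notin> E0" "{b,d} \<notin> E0"
    unfolding E0_def using i by (auto simp: doubleton_eq_iff)
  show "{a,c} \<notin> insert {b,d} E0"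
    unfolding E0_def using i interchangeable_vertices[OF assms(1,2)] by (auto simp: doubleton_eq_iff)
qed

lemma two_switch_degree:
  assumes "simple_on V E" "finite E" "interchangeable E (a,b,c,d)"
  shows "degree (two_switch (a,b,c,d) E) u = degree E u"
proof -
  define E0 where "E0 = E - {{a,b},{c,d}}"
  note decomp = two_switch_decomp[OF assms(1,3), folded E0_def]
  have fin: "finite E0" "finite (insert {c,d} E0)" "finite (insert {b,d} E0)"
    unfolding E0_def using assms(2) by simp_all
  have "degree E u = degree E0 u + (if u \<in> {c,d} then 1 else 0) + (if u \<in> {a,b} then 1 else 0)"
    by (subst decomp(1)) (simp only: degree_insert[OF fin(2) decomp(3)] degree_insert[OF fin(1) decomp(4)])
  moreover have "degree (two_switch (a,b,c,d) E) u
      = degree E0 u + (if u \<in> {b,d} then 1 else 0) + (if u \<in> {a,c} then 1 else 0)"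
    by (subst decomp(2)) (simp only: degree_insert[OF fin(3) decomp(5)] degree_insert[OF fin(1) decomp(6)])
  moreover have "a \<noteq> b" "c \<noteq> d" "a \<noteq> c" "a \<noteq> d" "b \<noteq> c" "b \<noteq> d"
    using interchangeable_vertices[OF assms(1,3)] assms(3) unfolding interchangeable_iff by auto
  ultimately show ?thesis by auto
qed

lemma two_switch_card:
  assumes "simple_on V E" "finite E" "interchangeable E (a,b,c,d)"
  shows "card (two_switch (a,b,c,d) E) = card E"
proof -
  define E0 where "E0 = E - {{a,b},{c,d}}"
  note decomp = two_switch_decomp[OF assms(1,3), folded E0_def]
  have fin: "finite E0" "finite (insert {c,d} E0)" "finite (insert {b,d} E0)"
    unfolding E0_def using assms(2) by simp_all
  have "card E = card E0 + 2"
    using decomp(1) card_insert_disjoint[OF fin(2) decomp(3)] card_insert_disjoint[OF fin(1) decomp(4)]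
    by simp
  moreover have "card (two_switch (a,b,c,d) E) = card E0 + 2"
    using decomp(2) card_insert_disjoint[OF fin(3) decomp(5)] card_insert_disjoint[OF fin(1) decomp(6)]
    by simp
  ultimately show ?thesis by simp
qed

lemma two_switch_simple_on:
  assumes "simple_on V E" "interchangeable E (a,b,c,d)"
  shows "simple_on V (two_switch (a,b,c,d) E)"
proof -
  have "simple_on V (E - {{a,b},{c,d}})" by (rule simple_on_mono[OF assms(1)]) auto
  then show ?thesis
    unfolding two_switch_eq[OF assms(2)] simple_on_def
    using interchangeable_vertices[OF assms] assms(2) unfolding interchangeable_iff by blast
qed

lemma adj_rtranclp_remove_two_edges:
  assumes "(adj E)\<^sup>*\<^sup>* u t" "t \<in> {a,b,c,d}"
  shows "\<exists>s\<in>{a,b,c,d}. (adj (E - {{a,b},{c,d}}))\<^sup>*\<^sup>* u s"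
  using assms
proof (induction rule: converse_rtranclp_induct)
  case (step u u1)
  show ?case
  proof (cases "{u,u1} \<in> {{a,b},{c,d}}")
    case True
    then show ?thesis by (auto simp: doubleton_eq_iff)
  next
    case False
    then have "adj (E - {{a,b},{c,d}}) u u1" using step(1) by (simp add: adj_def)
    then show ?thesis using step(3)[OF step(4)] by (meson converse_rtranclp_into_rtranclp)
  qed
qed auto

text \<open>After the switch, \<open>a,c\<close> and \<open>b,d\<close> are adjacent; one surviving path between the two pairs
  keeps the four endpoints, and hence everything, connected.\<close>
lemma two_switch_connected_on:
  assumes "simple_on V E" "connected_on V E" "interchangeable E (a,b,c,d)"
    and cross: "(adj (E - {{a,b},{c,d}}))\<^sup>*\<^sup>* p q" "p \<in> {a,c}" "q \<in> {b,d}"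
  shows "connected_on V (two_switch (a,b,c,d) E)"
proof -
  define F where "F = E - {{a,b},{c,d}}"
  define E' where "E' = two_switch (a,b,c,d) E"
  have E': "E' = F \<union> {{a,c},{b,d}}" unfolding E'_def F_def using two_switch_eq[OF assms(3)] by simp
  have FE': "F \<subseteq> E'" unfolding E' by auto
  have ac: "(adj E')\<^sup>*\<^sup>* a c" "(adj E')\<^sup>*\<^sup>* b d"
    unfolding E' by (auto intro!: edge_adj_rtranclp)
  have "(adj E')\<^sup>*\<^sup>* p q" using adj_rtranclp_mono[OF FE' cross(1)[folded F_def]] .
  then have "(adj E')\<^sup>*\<^sup>* a b"
    using cross(2,3) ac adj_rtranclp_sym by (auto intro: rtranclp_trans)
  then have to_a: "(adj E')\<^sup>*\<^sup>* s a" if "s \<in> {a,b,c,d}" for s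
    using that ac adj_rtranclp_sym by (auto intro: rtranclp_trans)
  have "(adj E')\<^sup>*\<^sup>* u a" if "u \<in> V" for u
  proof -
    have "(adj E)\<^sup>*\<^sup>* u a"
      using assms(2) that interchangeable_vertices[OF assms(1,3)] unfolding connected_on_def by blast
    then have "\<exists>s\<in>{a,b,c,d}. (adj F)\<^sup>*\<^sup>* u s"
      using adj_rtranclp_remove_two_edges[of E u a a b c d] unfolding F_def by simp
    then obtain s where "s \<in> {a,b,c,d}" "(adj F)\<^sup>*\<^sup>* u s" by blast
    then show ?thesis using adj_rtranclp_mono[OF FE'] to_a by (meson rtranclp_trans)
  qed
  then show ?thesis unfolding connected_on_def E'_def[symmetric]
    using adj_rtranclp_sym by (meson rtranclp_trans)
qed

lemma u_switch_onI:
  assumes "unicyclic_on V E" "interchangeable E (a,b,c,d)"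
    and "(adj (E - {{a,b},{c,d}}))\<^sup>*\<^sup>* p q" "p \<in> {a,c}" "q \<in> {b,d}"
  shows "u_switch_on V (a,b,c,d) E"
proof -
  have u: "finite V" "V \<noteq> {}" "simple_on V E" "connected_on V E" "card E = card V"
    using assms(1) unfolding unicyclic_on_def by auto
  show ?thesis unfolding u_switch_on_def unicyclic_on_def
    using assms(2) u two_switch_simple_on[OF u(3) assms(2)]
      two_switch_card[OF u(3) simple_on_finite[OF u(1,3)] assms(2)]
      two_switch_connected_on[OF u(3,4) assms(2-5)] by simp
qed

lemma u_switch_on_degree:
  assumes "unicyclic_on V E" "u_switch_on V A E"
  shows "degree (two_switch A E) u = degree E u"
proof -
  obtain a b c d where A: "A = (a,b,c,d)" by (cases A) auto
  have "simple_on V E" "finite E" using assms(1) simple_on_finite unfolding unicyclic_on_def by auto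
  then show ?thesis using two_switch_degree assms(2) A unfolding u_switch_on_def by simp
qed

lemma u_switch_on_reverse:
  assumes "unicyclic_on V E" "u_switch_on V (a,b,c,d) E"
  shows "u_switch_on V (a,c,b,d) (two_switch (a,b,c,d) E)"
    "two_switch (a,c,b,d) (two_switch (a,b,c,d) E) = E"
proof -
  have simple: "simple_on V E" using assms(1) unfolding unicyclic_on_def by auto
  have i: "interchangeable E (a,b,c,d)" using assms(2) unfolding u_switch_on_def by simp
  note v = interchangeable_vertices[OF simple i]
  define E' where "E' = two_switch (a,b,c,d) E"
  have E': "E' = (E - {{a,b},{c,d}}) \<union> {{a,c},{b,d}}" unfolding E'_def using two_switch_eq[OF i] .
  have i': "interchangeable E' (a,c,b,d)"
    using i v unfolding interchangeable_iff E' by (auto simp: doubleton_eq_iff)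
  have "two_switch (a,c,b,d) E' = (E' - {{a,c},{b,d}}) \<union> {{a,b},{c,d}}" using two_switch_eq[OF i'] .
  also have "\<dots> = E" unfolding E' using i v unfolding interchangeable_iff by auto
  finally show "two_switch (a,c,b,d) (two_switch (a,b,c,d) E) = E" unfolding E'_def .
  then show "u_switch_on V (a,c,b,d) (two_switch (a,b,c,d) E)"
    using i' assms(1) unfolding u_switch_on_def E'_def by simp
qed

lemma u_reachable_sym:
  assumes "unicyclic_on V G" "u_reachable V G H"
  shows "u_reachable V H G"
proof -
  have "u_reachable V (apply_switches As G) G"
    if "u_switch_seq_on V As G" "unicyclic_on V G" for As
    using that
  proof (induction As arbitrary: G)
    case (Cons A As)
    obtain a b c d where A: "A = (a,b,c,d)" by (cases A) auto
    have ok: "u_switch_on V A G" and rest: "u_switch_seq_on V As (two_switch A G)"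
      using Cons.prems by auto
    then have "unicyclic_on V (two_switch A G)" unfolding u_switch_on_def by simp
    then have "u_reachable V (apply_switches As (two_switch A G)) (two_switch A G)"
      using Cons.IH[OF rest] by blast
    moreover have "u_reachable V (two_switch A G) G"
      using u_switch_on_reverse[OF Cons.prems(2)] ok A u_reachable_step u_reachable_refl by metis
    ultimately show ?case using u_reachable_trans by simp
  qed (simp add: u_reachable_refl)
  then show ?thesis using assms unfolding u_reachable_def by blast
qed

section \<open>Leaves\<close>

lemma unicyclic_on_add_leaf:
  assumes "unicyclic_on W G" "v \<notin> W" "w \<in> W"
  shows "unicyclic_on (insert v W) (insert {v,w} G)"
proof -
  have u: "finite W" "simple_on W G" "connected_on W G" "card G = card W"
    using assms(1) unfolding unicyclic_on_def by auto
  have "{v,w} \<notin> G" using simple_on_doubleton[OF u(2), of v w] assms(2) by auto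
  then have card: "card (insert {v,w} G) = card (insert v W)"
    using u(1,4) simple_on_finite[OF u(1,2)] assms(2) by simp
  have simple: "simple_on (insert v W) (insert {v,w} G)"
    using u(2) assms(2,3) unfolding simple_on_def by blast
  have "(adj (insert {v,w} G))\<^sup>*\<^sup>* x w" if "x \<in> insert v W" for x
  proof (cases "x = v")
    case False
    then have "(adj G)\<^sup>*\<^sup>* x w" using u(3) assms(3) that unfolding connected_on_def by blast
    then show ?thesis using adj_rtranclp_mono[of G] by blast
  qed (simp add: edge_adj_rtranclp)
  then have "connected_on (insert v W) (insert {v,w} G)"
    unfolding connected_on_def using adj_rtranclp_sym by (meson rtranclp_trans)
  then show ?thesis unfolding unicyclic_on_def using simple card u(1) by simp
qed

lemma unicyclic_on_remove_leaf:
  assumes "unicyclic_on V E" "v \<in> V" "neighbours E v = {x}"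
  shows "unicyclic_on (V - {v}) (E - {{v,x}})"
proof -
  have u: "finite V" "simple_on V E" "connected_on V E" "card E = card V"
    using assms(1) unfolding unicyclic_on_def by auto
  have xE: "{v,x} \<in> E" using assms(3) by (rule neighbours_singletonD)
  then have "x \<in> V - {v}" using simple_on_doubleton[OF u(2)] by blast
  moreover have "card (E - {{v,x}}) = card (V - {v})"
    using u(4) xE assms(2) by (simp add: card_Diff_singleton)
  ultimately show ?thesis
    unfolding unicyclic_on_def using u(1) simple_on_remove_leaf[OF u(2) assms(3)]
      connected_on_remove_leaf[OF u(2,3) assms(3)] by auto
qed

lemma two_switch_add_leaf:
  assumes "simple_on W G" "interchangeable G A" "v \<notin> W"
  shows "interchangeable (insert {v,w} G) A"
    "two_switch A (insert {v,w} G) = insert {v,w} (two_switch A G)"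
proof -
  obtain a b c d where A: "A = (a,b,c,d)" by (cases A) auto
  note vs = interchangeable_vertices[OF assms(1) assms(2)[unfolded A]]
  have new: "{x,y} \<noteq> {v,w}" if "x \<in> W" "y \<in> W" for x y
    using that assms(3) by (auto simp: doubleton_eq_iff)
  show i: "interchangeable (insert {v,w} G) A"
    using assms(2) new[of a c] new[of b d] vs unfolding A interchangeable_iff by simp
  have "{a,b} \<noteq> {v,w}" "{c,d} \<noteq> {v,w}" using new[of a b] new[of c d] vs(3-6) by simp_all
  then have "insert {v,w} G - {{a,b},{c,d}} = insert {v,w} (G - {{a,b},{c,d}})" by blast
  then show "two_switch A (insert {v,w} G) = insert {v,w} (two_switch A G)"
    using two_switch_eq[OF i[unfolded A]] two_switch_eq[OF assms(2)[unfolded A]] unfolding A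
    by (simp add: insert_commute)
qed

text \<open>No switch touches the edge \<open>v w\<close>, so reattaching the leaf commutes with every switch.\<close>
lemma u_reachable_add_leaf:
  assumes "unicyclic_on W G" "u_reachable W G H" "v \<notin> W" "w \<in> W"
  shows "u_reachable (insert v W) (insert {v,w} G) (insert {v,w} H)"
proof -
  have "u_reachable (insert v W) (insert {v,w} G) (insert {v,w} (apply_switches As G))"
    if "u_switch_seq_on W As G" "unicyclic_on W G" for As
    using that
  proof (induction As arbitrary: G)
    case (Cons A As)
    have ok: "u_switch_on W A G" and rest: "u_switch_seq_on W As (two_switch A G)"
      using Cons.prems by auto
    have u: "unicyclic_on W (two_switch A G)" using ok unfolding u_switch_on_def by simp
    have simple: "simple_on W G" using Cons.prems(2) unfolding unicyclic_on_def by simp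
    have i: "interchangeable G A" using ok unfolding u_switch_on_def by simp
    note leaf = two_switch_add_leaf[OF simple i assms(3), of w]
    have "u_switch_on (insert v W) A (insert {v,w} G)"
      unfolding u_switch_on_def leaf using leaf(1) unicyclic_on_add_leaf[OF u assms(3,4)] by simp
    then show ?case using Cons.IH[OF rest u] leaf(2) u_reachable_step by fastforce
  qed (simp add: u_reachable_refl)
  then show ?thesis using assms(1,2) unfolding u_reachable_def by blast
qed

lemma degree_remove_edge:
  assumes "finite E" "e \<in> E" "u \<notin> e"
  shows "degree (E - {e}) u = degree E u"
  using degree_insert[of "E - {e}" e u] assms by (simp add: insert_absorb)

text \<open>The hypothesis \<open>reach\<close> is the induction hypothesis for the vertex set without the leaf.\<close>
lemma u_reachable_common_leaf:
  assumes G: "unicyclic_on V G" and H: "unicyclic_on V H"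
    and deg: "\<forall>u\<in>V. degree G u = degree H u"
    and v: "v \<in> V" "neighbours G v = {x}" "neighbours H v = {x}"
    and reach: "\<And>G' H'. unicyclic_on (V - {v}) G' \<Longrightarrow> unicyclic_on (V - {v}) H'
                  \<Longrightarrow> \<forall>u\<in>V - {v}. degree G' u = degree H' u \<Longrightarrow> u_reachable (V - {v}) G' H'"
  shows "u_reachable V G H"
proof -
  let ?e = "{v,x}"
  have e: "?e \<in> G" "?e \<in> H" using v(2,3) by (simp_all add: neighbours_singletonD)
  have fin: "finite G" "finite H"
    using G H simple_on_finite unfolding unicyclic_on_def by auto
  have G': "unicyclic_on (V - {v}) (G - {?e})" and H': "unicyclic_on (V - {v}) (H - {?e})"
    using unicyclic_on_remove_leaf G H v by auto
  have "x \<in> V - {v}" using G' H' e G v(1) simple_on_doubleton unfolding unicyclic_on_def by blast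
  have "degree (G - {?e}) u = degree (H - {?e}) u" if "u \<in> V - {v}" for u
  proof (cases "u = x")
    case True
    then show ?thesis
      using degree_insert[of "G - {?e}" ?e u] degree_insert[of "H - {?e}" ?e u] fin e deg that
      by (simp add: insert_absorb)
  next
    case False
    then show ?thesis using degree_remove_edge fin e deg that by simp
  qed
  then have "u_reachable (V - {v}) (G - {?e}) (H - {?e})" using reach[OF G' H'] by blast
  then have "u_reachable (insert v (V - {v})) (insert ?e (G - {?e})) (insert ?e (H - {?e}))"
    using u_reachable_add_leaf G' \<open>x \<in> V - {v}\<close> by blast
  then show ?thesis using v(1) e by (simp add: insert_absorb)
qed

lemma leaf_notin_walk:
  assumes "is_walk E p" "distinct p" "neighbours E v = {x}" "hd p \<noteq> v" "last p \<noteq> v"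
  shows "v \<notin> set p"
proof
  assume "v \<in> set p"
  then obtain j where j: "j < length p" "p ! j = v" by (meson in_set_conv_nth)
  have "p \<noteq> []" using j by auto
  then have "j \<noteq> 0" "j \<noteq> length p - 1" using j assms(4,5) hd_conv_nth last_conv_nth by metis+
  then have "0 < j" "Suc j < length p" using j(1) by linarith+
  note inner = distinct_walk_inner_neighbours[OF assms(1,2) this]
  then show False using j(2) assms(3) by simp
qed

text \<open>\<open>p1\<close> is the second vertex of a shortest path from \<open>w\<close> to \<open>x\<close>; its minimality gives the last
  two properties.\<close>
lemma shortest_path_first_step:
  assumes G: "unicyclic_on V G" and v: "neighbours G v = {x}" and w: "w \<in> V" "w \<noteq> v" "w \<noteq> x"
  obtains p1 where "p1 \<in> neighbours G w"
    "\<And>z. z \<in> neighbours G w \<Longrightarrow> z \<noteq> p1 \<Longrightarrow> (adj (G - {{v,x},{w,z}}))\<^sup>*\<^sup>* w x"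
    "x \<in> neighbours G w \<Longrightarrow> p1 = x"
    "\<And>q. x \<notin> neighbours G w \<Longrightarrow> q \<in> neighbours G w \<Longrightarrow> q \<in> neighbours G x
      \<Longrightarrow> p1 \<in> neighbours G x"
proof -
  have simple: "simple_on V G" using G unfolding unicyclic_on_def by simp
  have xV: "x \<in> V" "x \<noteq> v" using simple_on_doubleton[OF simple neighbours_singletonD[OF v]] by auto
  define P where "P p \<longleftrightarrow> is_walk G p \<and> distinct p \<and> hd p = w \<and> last p = x" for p
  have "(adj G)\<^sup>*\<^sup>* w x" using G w(1) xV(1) unfolding unicyclic_on_def connected_on_def by blast
  then obtain p0 where "P p0" unfolding P_def using adj_rtranclp_distinct_walk by metis
  then obtain p where p: "P p" and shortest: "\<And>p'. P p' \<Longrightarrow> length p \<le> length p'"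
    using ex_has_least_nat[of P p0 length] by metis
  have walk: "is_walk G p" "distinct p" "hd p = w" "last p = x" using p unfolding P_def by auto
  then obtain rest where p_rest: "p = w # rest" "rest \<noteq> []"
    using w(3) by (cases p; cases "tl p") auto
  have p1: "p ! 1 \<in> neighbours G w"
    using is_walk_edge[OF walk(1), of 0] p_rest by (simp add: in_neighbours_iff)
  show ?thesis
  proof (rule that[OF p1])
    fix z assume z: "z \<in> neighbours G w" "z \<noteq> p ! 1"
    have "v \<notin> set p" using leaf_notin_walk[OF walk(1,2) v] walk(3,4) w(2) xV(2) by simp
    have "{p!i, p!Suc i} \<in> G - {{v,x},{w,z}}" if i: "Suc i < length p" for i
    proof -
      have "v \<noteq> p!i" "v \<noteq> p!Suc i" using \<open>v \<notin> set p\<close> i by (auto dest: nth_mem)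
      moreover have "p!Suc i \<noteq> w"
        using nth_eq_iff_index_eq[OF walk(2) i, of 0] p_rest(1) by auto
      moreover have "p!i = w \<Longrightarrow> i = 0" using nth_eq_iff_index_eq[OF walk(2), of i 0] i p_rest(1) by auto
      ultimately show ?thesis using is_walk_edge[OF walk(1) i] z(2) by (auto simp: doubleton_eq_iff)
    qed
    then show "(adj (G - {{v,x},{w,z}}))\<^sup>*\<^sup>* w x"
      using walk_adj_rtranclp_within[of p] walk(3,4) p_rest by simp
  next
    assume "x \<in> neighbours G w"
    then have "P [w,x]" unfolding P_def using w(3) by (simp add: in_neighbours_iff adj_def)
    then have "length rest \<le> 1" using shortest p_rest(1) by fastforce
    then show "p ! 1 = x" using walk(4) p_rest by (cases rest) auto
  next
    fix q assume "x \<notin> neighbours G w" "q \<in> neighbours G w" "q \<in> neighbours G x"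
    moreover have "q \<noteq> w" "q \<noteq> x" using calculation neighbour_neq[OF simple] by blast+
    ultimately have "P [w,q,x]" unfolding P_def using w(3)
      by (simp add: in_neighbours_iff adj_def insert_commute)
    then have "length rest \<le> 2" using shortest p_rest(1) by fastforce
    moreover have "length rest \<noteq> 1"
      using walk(4) p_rest \<open>x \<notin> neighbours G w\<close> p1 by (auto simp: length_Suc_conv)
    ultimately obtain p1 where "rest = [p1, x]"
      using walk(4) p_rest by (auto simp: length_Suc_conv numeral_2_eq_2 le_Suc_eq)
    then show "p ! 1 \<in> neighbours G x"
      using is_walk_edge[OF walk(1), of 1] p_rest by (simp add: in_neighbours_iff insert_commute)
  qed
qed

lemma cycle_edges_image: "cycle_edges vs = (\<lambda>i. {vs!i, vs!((i+1) mod length vs)}) ` {..<length vs}"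
  unfolding cycle_edges_def by auto

lemma cycle_edges_triangle: "cycle_edges [a,b,c] = {{a,b},{b,c},{c,a}}"
proof -
  have "{..<length [a,b,c]} = {0,1,2}" by auto
  then show ?thesis unfolding cycle_edges_image by simp
qed

lemma cycle_edges_quadrilateral: "cycle_edges [a,b,c,d] = {{a,b},{b,c},{c,d},{d,a}}"
proof -
  have "{..<length [a,b,c,d]} = {0,1,2,3}" by auto
  then show ?thesis unfolding cycle_edges_image by simp
qed

lemma relocation_partner_if_three_le_degree:
  assumes G: "unicyclic_on V G" and w: "w \<noteq> x"
    and p1: "p1 \<in> neighbours G w" "x \<in> neighbours G w \<Longrightarrow> p1 = x"
      "\<And>q. x \<notin> neighbours G w \<Longrightarrow> q \<in> neighbours G w \<Longrightarrow> q \<in> neighbours G x \<Longrightarrow> p1 \<in> neighbours G x"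
    and deg: "3 \<le> degree G w"
  obtains z where "z \<in> neighbours G w" "z \<noteq> p1" "z \<noteq> x" "x \<notin> neighbours G z"
proof -
  have simple: "simple_on V G" and fin: "finite (neighbours G w)"
    using G finite_neighbours unfolding unicyclic_on_def by auto
  have "2 \<le> card (neighbours G w - {p1})"
    using deg p1(1) fin degree_eq_card_neighbours[OF simple] by (simp add: card_Diff_singleton)
  then obtain z1 z2 where z: "z1 \<in> neighbours G w" "z2 \<in> neighbours G w" "z1 \<noteq> p1" "z2 \<noteq> p1" "z1 \<noteq> z2"
    using two_le_cardE[of "neighbours G w - {p1}"] fin by blast
  have zw: "z1 \<noteq> w" "z2 \<noteq> w" using z neighbour_neq[OF simple] by blast+
  note partner = that
  show thesis
  proof (rule ccontr)
    assume "\<not> thesis"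
    then have bad: "z = x \<or> z \<in> neighbours G x" if "z \<in> neighbours G w" "z \<noteq> p1" for z
      using partner[of z] that in_neighbours_commute by blast
    show False
    proof (cases "x \<in> neighbours G w")
      case True
      then have zx: "z1 \<noteq> x" "z2 \<noteq> x" "z1 \<in> neighbours G x" "z2 \<in> neighbours G x"
        using z bad p1(2) by auto
      have cycle: "is_cycle G [w, zi, x]" if "zi \<in> neighbours G w" "zi \<in> neighbours G x" "zi \<noteq> x" for zi
        unfolding is_cycle_def cycle_edges_triangle
        using that w True neighbour_neq[OF simple that(1)] by (auto simp: in_neighbours_iff insert_commute)
      have "{w,z1} \<in> cycle_edges [w, z1, x]" by (simp add: cycle_edges_triangle)
      then have "{w,z1} \<in> cycle_edges [w, z2, x]"
        using unicyclic_on_unique_cycle[OF G cycle cycle] z zx by metis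
      then show False
        unfolding cycle_edges_triangle using z(5) zx zw w by (auto simp: doubleton_eq_iff)
    next
      case False
      then have zx: "z1 \<noteq> x" "z2 \<noteq> x" "z1 \<in> neighbours G x" "z2 \<in> neighbours G x"
        using z bad by auto
      then have p1x: "p1 \<in> neighbours G x" using p1(3) False z(1) by blast
      have p1_ne: "p1 \<noteq> w" "p1 \<noteq> x" using p1(1) False neighbour_neq[OF simple] by auto
      have cycle: "is_cycle G [w, p1, x, zi]"
        if "zi \<in> neighbours G w" "zi \<in> neighbours G x" "zi \<noteq> x" "zi \<noteq> p1" for zi
        unfolding is_cycle_def cycle_edges_quadrilateral
        using that w p1(1) p1x p1_ne neighbour_neq[OF simple that(1)]
        by (auto simp: in_neighbours_iff insert_commute)
      have "{x,z1} \<in> cycle_edges [w, p1, x, z1]" by (simp add: cycle_edges_quadrilateral)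
      then have "{x,z1} \<in> cycle_edges [w, p1, x, z2]"
        using unicyclic_on_unique_cycle[OF G cycle cycle] z zx by metis
      then show False
        unfolding cycle_edges_quadrilateral using z zx zw w p1_ne by (auto simp: doubleton_eq_iff)
    qed
  qed
qed

lemma relocation_partner_if_degree_two:
  assumes G: "unicyclic_on V G" and v: "neighbours G v = {x}" and w: "w \<noteq> v" "w \<noteq> x"
    and p1: "p1 \<in> neighbours G w" "x \<in> neighbours G w \<Longrightarrow> p1 = x"
      "\<And>q. x \<notin> neighbours G w \<Longrightarrow> q \<in> neighbours G w \<Longrightarrow> q \<in> neighbours G x \<Longrightarrow> p1 \<in> neighbours G x"
    and deg: "2 \<le> degree G w" "degree G x = 2"
  obtains z where "z \<in> neighbours G w" "z \<noteq> p1" "z \<noteq> x" "x \<notin> neighbours G z"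
proof -
  have simple: "simple_on V G" and fin: "finite (neighbours G w)" "finite (neighbours G x)"
    using G finite_neighbours unfolding unicyclic_on_def by auto
  have "1 \<le> card (neighbours G w - {p1})"
    using deg p1(1) fin degree_eq_card_neighbours[OF simple] by (simp add: card_Diff_singleton)
  then have "neighbours G w - {p1} \<noteq> {}" by (metis card.empty not_one_le_zero)
  then obtain z where z: "z \<in> neighbours G w" "z \<noteq> p1" by blast
  have v_w: "v \<notin> neighbours G w" using v w(2) in_neighbours_commute by fastforce
  have zvw: "z \<noteq> v" "z \<noteq> w" using z(1) v_w neighbour_neq[OF simple] by auto
  have "v \<in> neighbours G x" using v in_neighbours_commute by fastforce
  moreover have "card (neighbours G x) = 2" using deg(2) degree_eq_card_neighbours[OF simple] by simp
  ultimately obtain y where y: "neighbours G x = {v, y}"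
    using fin(2) by (metis card_2_iff doubleton_eq_iff insertE singletonD)
  have "z \<noteq> x" using z p1(2) by blast
  moreover have "x \<notin> neighbours G z"
  proof
    assume "x \<in> neighbours G z"
    then have "z = y" using y zvw in_neighbours_commute by blast
    show False
    proof (cases "x \<in> neighbours G w")
      case True
      then have "w = y" using y w(1) in_neighbours_commute by blast
      then show False using \<open>z = y\<close> zvw by simp
    next
      case False
      then have "p1 \<in> neighbours G x" using p1(3) z(1) \<open>x \<in> neighbours G z\<close> in_neighbours_commute by blast
      moreover have "p1 \<noteq> v" using p1(1) v_w by blast
      ultimately show False using y \<open>z = y\<close> z(2) by blast
    qed
  qed
  ultimately show thesis using that z by blast
qed

lemma leaf_relocation_switch:
  assumes G: "unicyclic_on V G" and v: "neighbours G v = {x}" and w: "w \<in> V" "w \<noteq> v" "w \<noteq> x"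
    and deg: "3 \<le> degree G w \<or> (2 \<le> degree G w \<and> degree G x = 2)"
  obtains z where "u_switch_on V (v,x,w,z) G" "{v,w} \<in> two_switch (v,x,w,z) G"
proof -
  obtain p1 where p1: "p1 \<in> neighbours G w"
    "\<And>z. z \<in> neighbours G w \<Longrightarrow> z \<noteq> p1 \<Longrightarrow> (adj (G - {{v,x},{w,z}}))\<^sup>*\<^sup>* w x"
    "x \<in> neighbours G w \<Longrightarrow> p1 = x"
    "\<And>q. x \<notin> neighbours G w \<Longrightarrow> q \<in> neighbours G w \<Longrightarrow> q \<in> neighbours G x \<Longrightarrow> p1 \<in> neighbours G x"
    using shortest_path_first_step[OF G v w] by blast
  obtain z where z: "z \<in> neighbours G w" "z \<noteq> p1" "z \<noteq> x" "x \<notin> neighbours G z"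
  proof (cases "3 \<le> degree G w")
    case True
    show thesis
      using p1(3,4) that by (rule relocation_partner_if_three_le_degree[OF G w(3) p1(1) _ _ True])
  next
    case False
    then have deg2: "2 \<le> degree G w" "degree G x = 2" using deg by auto
    show thesis
      using p1(3,4) deg2 that by (rule relocation_partner_if_degree_two[OF G v w(2,3) p1(1)])
  qed
  have "w \<notin> neighbours G v" using v w(3) by simp
  then have "{v,w} \<notin> G" "z \<noteq> v" using z(1) in_neighbours_commute by (auto simp: in_neighbours_iff)
  moreover have "{x,z} \<notin> G" "{w,z} \<in> G" using z(1,4) by (simp_all add: in_neighbours_iff insert_commute)
  ultimately have i: "interchangeable G (v,x,w,z)"
    unfolding interchangeable_iff using neighbours_singletonD[OF v] z(3) w(2,3) by auto
  then have "u_switch_on V (v,x,w,z) G" using u_switch_onI[OF G i p1(2)[OF z(1,2)]] by simp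
  moreover have "{v,w} \<in> two_switch (v,x,w,z) G" using two_switch_eq[OF i] by simp
  ultimately show thesis using that by blast
qed

section \<open>Hamiltonian cycles\<close>

text \<open>In a 2-regular graph no edge is a bridge: the component of \<open>b\<close> in \<open>G - {b b'}\<close> would
  have odd degree sum.\<close>
lemma two_regular_edge_not_bridge:
  assumes "finite V" "simple_on V G" "\<forall>u\<in>V. degree G u = 2" "{b,b'} \<in> G"
  shows "(adj (G - {{b,b'}}))\<^sup>*\<^sup>* b b'"
proof (rule ccontr)
  assume not_reach: "\<not> (adj (G - {{b,b'}}))\<^sup>*\<^sup>* b b'"
  define B where "B = {u \<in> V. (adj (G - {{b,b'}}))\<^sup>*\<^sup>* b u}"
  have fin: "finite B" "finite G" unfolding B_def using assms(1,2) simple_on_finite by auto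
  have "b \<in> V" using simple_on_doubleton[OF assms(2,4)] by blast
  then have "{b,b'} \<inter> B = {b}" unfolding B_def using not_reach by auto
  have even_edge: "even (card (e \<inter> B))" if e: "e \<in> G - {{b,b'}}" for e
  proof -
    have "e \<in> G" using e by blast
    then obtain p q where pq: "e = {p,q}" "p \<noteq> q" "p \<in> V" "q \<in> V"
      by (rule simple_on_edgeE[OF assms(2)])
    have "adj (G - {{b,b'}}) p q" "adj (G - {{b,b'}}) q p"
      using e pq(1) by (auto simp: adj_def insert_commute)
    then have "p \<in> B \<longleftrightarrow> q \<in> B" unfolding B_def using pq(3,4) by (auto intro: rtranclp.rtrancl_into_rtrancl)
    then have "e \<inter> B = {} \<or> e \<inter> B = {p,q}" using pq(1) by auto
    then show ?thesis using pq(2) by auto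
  qed
  have "(\<Sum>u\<in>B. degree G u) = 2 * card B"
    using assms(3) unfolding B_def by simp
  moreover have "(\<Sum>u\<in>B. degree G u) = card ({b,b'} \<inter> B) + (\<Sum>e\<in>G - {{b,b'}}. card (e \<inter> B))"
    using sum_degree_eq_sum_card_inter[OF fin] sum.remove[OF fin(2) assms(4)] by simp
  moreover have "even (\<Sum>e\<in>G - {{b,b'}}. card (e \<inter> B))" using even_edge by (intro dvd_sum) auto
  ultimately have "Suc (\<Sum>e\<in>G - {{b,b'}}. card (e \<inter> B)) = 2 * card B"
    "even (\<Sum>e\<in>G - {{b,b'}}. card (e \<inter> B))"
    using \<open>{b,b'} \<inter> B = {b}\<close> by simp_all
  then show False by presburger
qed

lemma unicyclic_on_eq_if_common_connected:
  assumes G: "unicyclic_on V G" and H: "unicyclic_on V H"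
    and deg: "\<forall>u\<in>V. degree G u = degree H u" and common: "connected_on V (G \<inter> H)"
  shows "G = H"
proof -
  have u: "finite V" "V \<noteq> {}" "simple_on V G" "card G = card V" "simple_on V H" "card H = card V"
    using G H unfolding unicyclic_on_def by auto
  have fin: "finite G" "finite H" using simple_on_finite u by blast+
  have "card V \<le> card (G \<inter> H) + 1"
    using connected_card_le[OF u(1,2) simple_on_mono[OF u(3)] common] by blast
  moreover have "card (G \<inter> H) \<le> card G" using fin by (simp add: card_mono)
  ultimately consider "card (G \<inter> H) = card G" | "card (G \<inter> H) + 1 = card G" using u(4) by linarith
  then show ?thesis
  proof cases
    case 1
    then have "G \<inter> H = G" "G \<inter> H = H"
      using card_subset_eq[OF fin(1), of "G \<inter> H"] card_subset_eq[OF fin(2), of "G \<inter> H"] u(4,6)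
      by auto
    then show ?thesis by simp
  next
    case 2
    then have "card (G - G \<inter> H) = 1" "card (H - G \<inter> H) = 1"
      using card_Diff_subset[of "G \<inter> H"] fin u(4,6) by (simp_all add: finite_subset)
    then obtain e f where e: "G - G \<inter> H = {e}" and f: "H - G \<inter> H = {f}"
      by (auto simp: card_1_singleton_iff)
    have GH: "G = insert e (G \<inter> H)" "e \<notin> G \<inter> H" "H = insert f (G \<inter> H)" "f \<notin> G \<inter> H"
      using e f by auto
    have "u \<in> e \<longleftrightarrow> u \<in> f" if "u \<in> V" for u
      using degree_insert[of "G \<inter> H" e u] degree_insert[of "G \<inter> H" f u] fin GH deg that
      by (auto split: if_splits)
    moreover have "e \<in> G" "f \<in> H" using GH(1,3) insertI1 by metis+
    then have "e \<subseteq> V" "f \<subseteq> V" using simple_on_subset_Pow u(3,5) by (meson PowD subsetD)+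
    ultimately have "e = f" by blast
    then show ?thesis using GH by metis
  qed
qed

lemma neighbours_remove_edge: "neighbours (G - {{b,c}}) c = neighbours G c - {b}"
  unfolding neighbours_def by (auto simp: doubleton_eq_iff)

lemma two_regular_remove_edge_leaf:
  assumes "finite V" "simple_on V G" "\<forall>u\<in>V. degree G u = 2" "{b,c} \<in> G"
  obtains d where "neighbours (G - {{b,c}}) c = {d}"
proof -
  have "b \<in> neighbours G c" using assms(4) by (simp add: in_neighbours_iff insert_commute)
  moreover have "card (neighbours G c) = 2"
    using assms(3) simple_on_doubleton[OF assms(2,4)] degree_eq_card_neighbours[OF assms(2)] by simp
  ultimately have "card (neighbours (G - {{b,c}}) c) = 1"
    using finite_neighbours[OF assms(1,2)] by (simp add: neighbours_remove_edge card_Diff_singleton)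
  then show ?thesis using that by (auto simp: card_1_singleton_iff)
qed

lemma two_regular_neighbours:
  assumes "finite V" "simple_on V G" "\<forall>u\<in>V. degree G u = 2" "u \<in> V"
    and "a \<in> neighbours G u" "c \<in> neighbours G u" "a \<noteq> c"
  shows "neighbours G u = {a,c}"
proof -
  have "{a,c} \<subseteq> neighbours G u" using assms(5,6) by blast
  moreover have "card (neighbours G u) = card {a,c}"
    using assms(3,4,7) degree_eq_card_neighbours[OF assms(2)] by simp
  ultimately show ?thesis using card_subset_eq[OF finite_neighbours[OF assms(1,2)]] by metis
qed

lemma distinct_walk_butlast_avoids_last:
  assumes "is_walk E q" "distinct q" "2 \<le> length q"
  shows "(adj (E - {{last q, z}}))\<^sup>*\<^sup>* (hd q) (q ! (length q - 2))"
proof -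
  let ?L = "length q"
  have "q \<noteq> []" using assms(3) by auto
  then have last: "last q = q!(?L - 1)" by (simp add: last_conv_nth)
  have "{q!t, q!Suc t} \<in> E - {{last q, z}}" if t: "t < ?L - 2" for t
  proof -
    have "q!t \<noteq> q!(?L - 1)" "q!Suc t \<noteq> q!(?L - 1)"
      using nth_eq_iff_index_eq[OF assms(2), of t "?L - 1"]
        nth_eq_iff_index_eq[OF assms(2), of "Suc t" "?L - 1"] t by auto
    then show ?thesis
      using is_walk_edge[OF assms(1), of t] t last by (auto simp: doubleton_eq_iff)
  qed
  then show ?thesis
    using adj_rtranclp_chain[of "?L - 2" "(!) q"] \<open>q \<noteq> []\<close> by (simp add: hd_conv_nth)
qed

text \<open>\<open>y'\<close> is the predecessor of \<open>y\<close> on a path from \<open>b\<close> to \<open>y\<close> avoiding the edge \<open>b bp\<close>.\<close>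
lemma two_regular_switch:
  assumes G: "unicyclic_on V G" and reg: "\<forall>u\<in>V. degree G u = 2"
    and b: "{b,bp} \<in> G" and y: "y \<in> V" "y \<noteq> b" "{b,y} \<notin> G"
  obtains y' where "{y,y'} \<in> G" "u_switch_on V (b,bp,y,y') G"
proof -
  have u: "finite V" "simple_on V G" "connected_on V G" using G unfolding unicyclic_on_def by auto
  define G' where "G' = G - {{b,bp}}"
  have "connected_on V G'"
    unfolding G'_def using connected_on_remove_edge[OF u(3) two_regular_edge_not_bridge[OF u(1,2) reg b]] .
  moreover have bV: "b \<in> V" "bp \<noteq> b" using simple_on_doubleton[OF u(2) b] by auto
  ultimately have "(adj G')\<^sup>*\<^sup>* b y" using y(1) unfolding connected_on_def by blast
  then obtain q where q: "is_walk G' q" "distinct q" "hd q = b" "last q = y"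
    by (rule adj_rtranclp_distinct_walk)
  define L where "L = length q"
  have edge: "{q!i, q!Suc i} \<in> G'" if "Suc i < L" for i using is_walk_edge[OF q(1)] that L_def by simp
  have q0: "q ! 0 = b" and qL: "q ! (L - 1) = y"
    using q(1,3,4) L_def by (auto simp: hd_conv_nth last_conv_nth is_walk_conv_nth)
  have "L \<noteq> 0" "L \<noteq> 1" using q(1) q0 qL y(2) L_def by (auto simp: is_walk_conv_nth)
  moreover have "L \<noteq> 2" using edge[of 0] q0 qL y(3) unfolding G'_def by auto
  ultimately have L3: "3 \<le> L" by linarith
  define y' where "y' = q ! (L - 2)"
  have yy': "{y',y} \<in> G'" using edge[of "L - 2"] L3 qL y'_def by (simp add: Suc_diff_Suc numeral_2_eq_2)
  have inner: "q!(L-3) \<in> neighbours G' y'" "y \<in> neighbours G' y'" "q!(L-3) \<noteq> y"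
    using distinct_walk_inner_neighbours[OF q(1,2), of "L - 2"] L3 qL L_def y'_def
    by (simp_all add: Suc_diff_Suc numeral_2_eq_2 numeral_3_eq_3 diff_diff_add)
  have "bp \<noteq> y" using b y(3) by auto
  moreover obtain d where "neighbours G' bp = {d}"
    using two_regular_remove_edge_leaf[OF u(1,2) reg b] unfolding G'_def by blast
  ultimately have "bp \<notin> set q" using leaf_notin_walk[OF q(1,2)] q(3,4) bV(2) by blast
  then have y'_ne: "y' \<noteq> bp" "q!(L-3) \<noteq> bp" unfolding y'_def using L3 L_def by auto
  have "q \<noteq> []" using L3 L_def by auto
  then have "y' \<noteq> b" unfolding y'_def using nth_eq_iff_index_eq[OF q(2), of "L-2" 0] q0 L3 L_def by simp
  moreover have "{bp, y'} \<notin> G"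
  proof
    assume "{bp, y'} \<in> G"
    then have "bp \<in> neighbours G y'" by (simp add: in_neighbours_iff insert_commute)
    moreover have "y' \<in> V" using simple_on_doubleton[OF u(2)] yy' unfolding G'_def by blast
    moreover have "q!(L-3) \<in> neighbours G y'" "y \<in> neighbours G y'"
      using inner(1,2) unfolding G'_def by (simp_all add: in_neighbours_iff)
    ultimately show False
      using two_regular_neighbours[OF u(1,2) reg] inner(3) y'_ne \<open>bp \<noteq> y\<close> by blast
  qed
  moreover have "{y,y'} \<in> G" using yy' unfolding G'_def by (simp add: insert_commute)
  moreover have "b \<noteq> y" "bp \<noteq> y'" using y(2) y'_ne(1) by auto
  ultimately have i: "interchangeable G (b,bp,y,y')"
    unfolding interchangeable_iff using b y(3) \<open>bp \<noteq> y\<close> by blast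
  have "(adj (G' - {{y,y'}}))\<^sup>*\<^sup>* b y'"
    using distinct_walk_butlast_avoids_last[OF q(1,2), of y'] q(3,4) L3 L_def y'_def by simp
  moreover have "G' - {{y,y'}} = G - {{b,bp},{y,y'}}" unfolding G'_def by blast
  ultimately have "u_switch_on V (b,bp,y,y') G" using u_switch_onI[OF G i] by simp
  then show thesis using that \<open>{y,y'} \<in> G\<close> by blast
qed

text \<open>Agreement of \<open>G\<close> with \<open>H\<close>, ordered lexicographically: first the number of common edges, then
  the size of the component of \<open>r\<close> in \<open>G \<inter> H\<close> (which is at most \<open>card V\<close>).\<close>
definition agreement :: "nat set \<Rightarrow> graph \<Rightarrow> nat \<Rightarrow> graph \<Rightarrow> nat" where
  "agreement V H r G = (card V + 1) * card (G \<inter> H) + card {u \<in> V. (adj (G \<inter> H))\<^sup>*\<^sup>* r u}"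

lemma agreement_le:
  assumes "finite V" "finite H" "card H = card V"
  shows "agreement V H r G \<le> (card V + 1) * card V + card V"
proof -
  have "card (G \<inter> H) \<le> card V" using assms card_mono[of H "G \<inter> H"] by simp
  then have "(card V + 1) * card (G \<inter> H) \<le> (card V + 1) * card V" by (rule mult_le_mono2)
  moreover have "card {u \<in> V. (adj (G \<inter> H))\<^sup>*\<^sup>* r u} \<le> card V" using assms(1) by (simp add: card_mono)
  ultimately show ?thesis unfolding agreement_def by linarith
qed

text \<open>Either a common edge is gained, or their number stays and \<open>y\<close> joins the component of \<open>r\<close>.\<close>
lemma agreement_less_two_switch:
  assumes V: "finite V" "y \<in> V" and fin: "finite H"
    and reach: "(adj (G \<inter> H))\<^sup>*\<^sup>* r b" "\<not> (adj (G \<inter> H))\<^sup>*\<^sup>* r y"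
    and edges: "{b,y} \<in> H" "{b,bp} \<notin> H" "{y,y'} \<in> G"
  shows "agreement V H r G < agreement V H r ((G - {{b,bp},{y,y'}}) \<union> {{b,y},{bp,y'}})"
proof -
  define K where "K = G \<inter> H"
  define K2 where "K2 = ((G - {{b,bp},{y,y'}}) \<union> {{b,y},{bp,y'}}) \<inter> H"
  define S where "S = {u \<in> V. (adj K)\<^sup>*\<^sup>* r u}"
  define S2 where "S2 = {u \<in> V. (adj K2)\<^sup>*\<^sup>* r u}"
  have K2: "insert {b,y} (K - {{y,y'}}) \<subseteq> K2" unfolding K_def K2_def using edges by auto
  have byK: "{b,y} \<notin> K"
    using reach edge_adj_rtranclp[of b y K] rtranclp_trans[of "adj K" r b y] unfolding K_def by blast
  have fin_K: "finite K" "finite K2" unfolding K_def K2_def using fin by simp_all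
  have "card S \<le> card V" unfolding S_def using V(1) by (simp add: card_mono)
  have "(card V + 1) * card K + card S < (card V + 1) * card K2 + card S2"
  proof (cases "{y,y'} \<in> H")
    case False
    then have "insert {b,y} K \<subseteq> K2" using K2 unfolding K_def by auto
    then have "card (insert {b,y} K) \<le> card K2" by (rule card_mono[OF fin_K(2)])
    then have "card K + 1 \<le> card K2" using byK fin_K(1) by simp
    then have "(card V + 1) * (card K + 1) \<le> (card V + 1) * card K2" by (rule mult_le_mono2)
    moreover have "(card V + 1) * (card K + 1) = (card V + 1) * card K + card V + 1" by simp
    ultimately show ?thesis using \<open>card S \<le> card V\<close> by linarith
  next
    case True
    then have "{y,y'} \<in> K" unfolding K_def using edges(3) by simp
    then have "card (insert {b,y} (K - {{y,y'}})) = card K"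
      using byK fin_K(1) by (simp add: card_Diff_singleton) (metis card_Diff1_less card_gt_0_iff Suc_pred empty_iff)
    then have "card K \<le> card K2" using card_mono[OF fin_K(2) K2] by simp
    have in_S2: "(adj K2)\<^sup>*\<^sup>* r s" if "(adj K)\<^sup>*\<^sup>* r s" for s
    proof -
      have "(adj (K - {{y,y'}}))\<^sup>*\<^sup>* r s"
        using adj_rtranclp_avoid_edge[OF that] reach(2) unfolding K_def by blast
      then show ?thesis using adj_rtranclp_mono[of "K - {{y,y'}}" K2] K2 by blast
    qed
    have "insert y S \<subseteq> S2"
    proof -
      have "(adj K2)\<^sup>*\<^sup>* r y"
        using in_S2[OF reach(1)[folded K_def]] K2 by (auto simp: adj_def intro: rtranclp.rtrancl_into_rtrancl)
      then show ?thesis using in_S2 V(2) unfolding S_def S2_def by blast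
    qed
    moreover have "y \<notin> S" using reach(2) unfolding S_def K_def by blast
    ultimately have "card S + 1 \<le> card S2"
      using card_mono[of S2 "insert y S"] V(1) unfolding S_def S2_def by simp
    moreover have "(card V + 1) * card K \<le> (card V + 1) * card K2"
      using \<open>card K \<le> card K2\<close> by (rule mult_le_mono2)
    ultimately show ?thesis by linarith
  qed
  then show ?thesis unfolding agreement_def K_def K2_def S_def S2_def .
qed

lemma two_regular_agreement_step:
  assumes G: "unicyclic_on V G" and H: "unicyclic_on V H"
    and reg: "\<forall>u\<in>V. degree G u = 2" "\<forall>u\<in>V. degree H u = 2" and "G \<noteq> H" and r: "r \<in> V"
  obtains A where "u_switch_on V A G" "agreement V H r G < agreement V H r (two_switch A G)"
proof -
  have u: "finite V" "simple_on V G" "simple_on V H" "connected_on V H"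
    using G H unfolding unicyclic_on_def by auto
  define S where "S = {u \<in> V. (adj (G \<inter> H))\<^sup>*\<^sup>* r u}"
  have "S \<noteq> V"
  proof
    assume "S = V"
    then have "connected_on V (G \<inter> H)"
      unfolding connected_on_def S_def using adj_rtranclp_sym by (blast intro: rtranclp_trans)
    then show False using unicyclic_on_eq_if_common_connected[OF G H] reg \<open>G \<noteq> H\<close> by simp
  qed
  then obtain u0 where "u0 \<in> V" "u0 \<notin> S" unfolding S_def by blast
  moreover have "(adj H)\<^sup>*\<^sup>* r u0" using u(4) r \<open>u0 \<in> V\<close> unfolding connected_on_def by blast
  moreover have "r \<in> S" unfolding S_def using r by simp
  ultimately obtain b y where cross: "b \<in> S" "y \<notin> S" "{b,y} \<in> H" by (meson adj_rtranclp_crossing_edge)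
  then have bV: "b \<in> V" "y \<in> V" "y \<noteq> b" using simple_on_doubleton[OF u(3)] by blast+
  have reach: "(adj (G \<inter> H))\<^sup>*\<^sup>* r b" "\<not> (adj (G \<inter> H))\<^sup>*\<^sup>* r y" using cross bV unfolding S_def by auto
  have "{b,y} \<notin> G"
  proof
    assume "{b,y} \<in> G"
    then have "(adj (G \<inter> H))\<^sup>*\<^sup>* r y"
      using reach(1) cross(3) edge_adj_rtranclp[of b y "G \<inter> H"] by (simp add: rtranclp_trans)
    then show False using reach(2) by simp
  qed
  obtain bp where bp: "{b,bp} \<in> G" "{b,bp} \<notin> H"
  proof -
    have "y \<in> neighbours H b" "y \<notin> neighbours G b" using cross(3) \<open>{b,y} \<notin> G\<close> by (simp_all add: in_neighbours_iff)
    moreover have "card (neighbours G b) = card (neighbours H b)" "finite (neighbours H b)"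
      using reg bV degree_eq_card_neighbours u finite_neighbours by auto
    ultimately have "\<not> neighbours G b \<subseteq> neighbours H b - {y}"
      by (metis card_Diff1_less card_mono finite_Diff not_le)
    then obtain c where "c \<in> neighbours G b" "c \<notin> neighbours H b - {y}" by blast
    moreover have "c \<noteq> y" using \<open>y \<notin> neighbours G b\<close> calculation(1) by blast
    ultimately show thesis using that[of c] by (simp add: in_neighbours_iff)
  qed
  obtain y' where y': "{y,y'} \<in> G" "u_switch_on V (b,bp,y,y') G"
    using two_regular_switch[OF G reg(1) bp(1) bV(2,3) \<open>{b,y} \<notin> G\<close>] by blast
  then have "two_switch (b,bp,y,y') G = (G - {{b,bp},{y,y'}}) \<union> {{b,y},{bp,y'}}"
    using two_switch_eq unfolding u_switch_on_def by blast
  then have "agreement V H r G < agreement V H r (two_switch (b,bp,y,y') G)"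
    using agreement_less_two_switch[OF u(1) bV(2) simple_on_finite[OF u(1,3)] reach cross(3) bp(2) y'(1)]
    by simp
  then show thesis using that y'(2) by blast
qed

lemma two_regular_u_reachable:
  assumes G: "unicyclic_on V G" and H: "unicyclic_on V H"
    and reg: "\<forall>u\<in>V. degree G u = 2" "\<forall>u\<in>V. degree H u = 2"
  shows "u_reachable V G H"
proof -
  have u: "finite V" "V \<noteq> {}" "finite H" "card H = card V"
    using H simple_on_finite unfolding unicyclic_on_def by auto
  obtain r where r: "r \<in> V" using u(2) by blast
  define bound where "bound = (card V + 1) * card V + card V"
  have bounded: "agreement V H r X \<le> bound" for X
    unfolding bound_def using agreement_le[OF u(1,3,4)] .
  show ?thesis
    using G reg(1)
  proof (induction "bound - agreement V H r G" arbitrary: G rule: less_induct)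
    case less
    show ?case
    proof (cases "G = H")
      case False
      then obtain A where A: "u_switch_on V A G" "agreement V H r G < agreement V H r (two_switch A G)"
        using two_regular_agreement_step[OF less.prems(1) H less.prems(2) reg(2) _ r] by blast
      have "unicyclic_on V (two_switch A G)" using A(1) unfolding u_switch_on_def by simp
      moreover have "\<forall>u\<in>V. degree (two_switch A G) u = 2"
        using u_switch_on_degree[OF less.prems(1) A(1)] less.prems(2) by simp
      moreover have "bound - agreement V H r (two_switch A G) < bound - agreement V H r G"
        using A(2) bounded[of "two_switch A G"] by linarith
      ultimately show ?thesis using less.hyps u_reachable_step[OF A(1)] by blast
    qed (simp add: u_reachable_refl)
  qed
qed

lemma unicyclic_on_degree_pos:
  assumes G: "unicyclic_on V G" and v: "v \<in> V"
  shows "0 < degree G v"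
proof -
  have u: "finite V" "simple_on V G" "connected_on V G" "card G = card V"
    using G unfolding unicyclic_on_def by auto
  have "V \<noteq> {v}"
  proof
    assume "V = {v}"
    then have "G = {}" using u(2) by (auto elim: simple_on_edgeE)
    then show False using u(4) \<open>V = {v}\<close> by simp
  qed
  then obtain u where "u \<in> V" "u \<noteq> v" using v by blast
  then show ?thesis using connected_on_degree_pos[OF u(1-3)] v by blast
qed

lemma leaf_neighbour_degree:
  assumes G: "unicyclic_on V G" and v: "v \<in> V" "neighbours G v = {w}"
  shows "2 \<le> degree G w"
proof (rule ccontr)
  assume "\<not> 2 \<le> degree G w"
  have u: "finite V" "simple_on V G" "connected_on V G" "card G = card V"
    using G unfolding unicyclic_on_def by auto
  have vw: "{v,w} \<in> G" using v(2) by (rule neighbours_singletonD)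
  then have wV: "w \<in> V" "w \<noteq> v" using simple_on_doubleton[OF u(2)] by auto
  have "v \<in> neighbours G w" using vw by (simp add: in_neighbours_iff insert_commute)
  moreover have "card (neighbours G w) \<le> 1"
    using \<open>\<not> 2 \<le> degree G w\<close> degree_eq_card_neighbours[OF u(2)] by simp
  ultimately have wv: "neighbours G w = {v}"
    using finite_neighbours[OF u(1,2)] by (metis card_le_Suc0_iff_eq One_nat_def insertI1 subsetI
        subset_antisym insert_absorb singleton_insert_inj_eq' empty_iff insertE)
  have closed: "t \<in> {v,w}" if "(adj G)\<^sup>*\<^sup>* v t" for t
    using that
  proof (induction rule: rtranclp_induct)
    case (step z t)
    then have "t \<in> neighbours G z" by (simp add: adj_def in_neighbours_iff)
    then show ?case using step(3) v(2) wv by auto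
  qed simp
  then have "V = {v,w}" using u(3) v(1) wV unfolding connected_on_def by blast
  moreover have "G \<subseteq> {{v,w}}"
    using u(2) \<open>V = {v,w}\<close> by (auto simp: insert_commute elim!: simple_on_edgeE)
  then have "card G \<le> 1" using card_mono[of "{{v,w}}" G] by simp
  ultimately show False using u(4) wV(2) by simp
qed

lemma no_leaf_two_regular:
  assumes G: "unicyclic_on V G" and "\<forall>v\<in>V. degree G v \<noteq> 1"
  shows "\<forall>v\<in>V. degree G v = 2"
proof -
  have u: "finite V" "simple_on V G" "card G = card V" using G unfolding unicyclic_on_def by auto
  have ge2: "2 \<le> degree G v" if "v \<in> V" for v
    using unicyclic_on_degree_pos[OF G that] assms(2) that by fastforce
  have sum: "(\<Sum>v\<in>V. degree G v) = (\<Sum>v\<in>V. 2)"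
    using sum_degree_eq_twice_card[OF u(1,2)] u(3) by simp
  show ?thesis
  proof (rule ccontr)
    assume "\<not> (\<forall>v\<in>V. degree G v = 2)"
    then obtain v where "v \<in> V" "2 < degree G v" using ge2 by (metis le_neq_implies_less)
    then have "(\<Sum>v\<in>V. 2) < (\<Sum>v\<in>V. degree G v)"
      using ge2 u(1) by (intro sum_strict_mono_ex1) auto
    then show False using sum by simp
  qed
qed

text \<open>If a leaf \<open>v\<close> has different neighbours \<open>x\<close> in \<open>G\<close> and \<open>w\<close> in \<open>H\<close>, one u-switch moves it to a
  common neighbour: in \<open>G\<close> onto \<open>w\<close> if \<open>w\<close> has degree at least 3, else in \<open>H\<close> onto \<open>x\<close>.\<close>
lemma leaf_common_neighbour:
  assumes G: "unicyclic_on V G" and H: "unicyclic_on V H"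
    and deg: "\<forall>u\<in>V. degree G u = degree H u" and v: "v \<in> V" "degree G v = 1"
  obtains G1 H1 x where "u_reachable V G G1" "u_reachable V H1 H" "unicyclic_on V G1" "unicyclic_on V H1"
    "\<forall>u\<in>V. degree G1 u = degree H1 u" "neighbours G1 v = {x}" "neighbours H1 v = {x}"
proof -
  have simple: "simple_on V G" "simple_on V H" using G H unfolding unicyclic_on_def by auto
  obtain x where x: "neighbours G v = {x}" using degree_one_neighbours[OF simple(1) v(2)] by blast
  obtain w where w: "neighbours H v = {w}" using degree_one_neighbours[OF simple(2)] deg v by metis
  have xV: "x \<in> V" "x \<noteq> v" using simple_on_doubleton[OF simple(1) neighbours_singletonD[OF x]] by auto
  have wV: "w \<in> V" "w \<noteq> v" using simple_on_doubleton[OF simple(2) neighbours_singletonD[OF w]] by auto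
  have new_leaf: "neighbours K v = {y}" if "unicyclic_on V K" "degree K v = 1" "{v,y} \<in> K" for K y
    using that degree_one_neighbours[of V K v] unfolding unicyclic_on_def
    by (metis in_neighbours_iff singletonD)
  consider "x = w" | "x \<noteq> w" "3 \<le> degree G w" | "x \<noteq> w" "\<not> 3 \<le> degree G w" by blast
  then show thesis
  proof cases
    case 1
    then show thesis using that[OF u_reachable_refl u_reachable_refl G H deg x] w by simp
  next
    case 2
    then obtain z where z: "u_switch_on V (v,x,w,z) G" "{v,w} \<in> two_switch (v,x,w,z) G"
      using leaf_relocation_switch[OF G x wV(1,2)] by metis
    let ?G1 = "two_switch (v,x,w,z) G"
    have G1: "unicyclic_on V ?G1" using z(1) unfolding u_switch_on_def by simp
    have deg1: "\<forall>u\<in>V. degree ?G1 u = degree H u" using u_switch_on_degree[OF G z(1)] deg by simp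
    have "neighbours ?G1 v = {w}" using new_leaf[OF G1 _ z(2)] deg1 deg v by simp
    then show thesis
      using that[OF u_reachable_step[OF z(1) u_reachable_refl] u_reachable_refl G1 H deg1] w by blast
  next
    case 3
    have "2 \<le> degree H x" "degree H w = 2"
      using leaf_neighbour_degree[OF G v(1) x] leaf_neighbour_degree[OF H v(1) w] 3(2) deg xV wV
      by auto
    then obtain z where z: "u_switch_on V (v,w,x,z) H" "{v,x} \<in> two_switch (v,w,x,z) H"
      using leaf_relocation_switch[OF H w xV(1,2)] 3(1) by metis
    let ?H1 = "two_switch (v,w,x,z) H"
    have H1: "unicyclic_on V ?H1" using z(1) unfolding u_switch_on_def by simp
    have deg1: "\<forall>u\<in>V. degree G u = degree ?H1 u" using u_switch_on_degree[OF H z(1)] deg by simp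
    have "neighbours ?H1 v = {x}" using new_leaf[OF H1 _ z(2)] deg1 v by simp
    moreover have "u_reachable V ?H1 H"
      using u_reachable_sym[OF H u_reachable_step[OF z(1) u_reachable_refl]] .
    ultimately show thesis using that[OF u_reachable_refl _ G H1 deg1 x] by blast
  qed
qed

lemma unicyclic_on_u_reachable:
  assumes "unicyclic_on V G" "unicyclic_on V H" "\<forall>u\<in>V. degree G u = degree H u"
  shows "u_reachable V G H"
  using assms
proof (induction "card V" arbitrary: V G H rule: less_induct)
  case less
  show ?case
  proof (cases "\<exists>v\<in>V. degree G v = 1")
    case True
    then obtain v where v: "v \<in> V" "degree G v = 1" by blast
    obtain G1 H1 x where reach: "u_reachable V G G1" "u_reachable V H1 H"
      and G1: "unicyclic_on V G1" "unicyclic_on V H1" "\<forall>u\<in>V. degree G1 u = degree H1 u"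
      and x: "neighbours G1 v = {x}" "neighbours H1 v = {x}"
      using leaf_common_neighbour[OF less.prems v] by blast
    have "finite V" using less.prems(1) unfolding unicyclic_on_def by simp
    then have "card (V - {v}) < card V" using v(1) by (rule card_Diff1_less)
    then have "u_reachable V G1 H1"
      using u_reachable_common_leaf[OF G1 v(1) x] less.hyps by blast
    then show ?thesis using reach u_reachable_trans by blast
  next
    case False
    then have "\<forall>v\<in>V. degree G v = 2" "\<forall>v\<in>V. degree H v = 2"
      using no_leaf_two_regular[OF less.prems(1)] less.prems(3) by auto
    then show ?thesis using two_regular_u_reachable[OF less.prems(1,2)] by blast
  qed
qed

theorem theorem3p9:
  fixes s :: "nat list" and U U' :: graph
  assumes "U \<in> U_set s" and "U' \<in> U_set s"
  shows "\<exists>As. u_switch_seq (length s) As U \<and> apply_switches As U = U'"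
proof -
  define n where "n = length s"
  have "map (degree U) [1..<n+1] = map (degree U') [1..<n+1]"
    using assms unfolding U_set_def deg_seq_def n_def by simp
  then have "\<forall>u\<in>set [1..<n+1]. degree U u = degree U' u" by (simp only: map_eq_conv)
  moreover have "set [1..<n+1] = {1..n}" by auto
  ultimately have "\<forall>u\<in>{1..n}. degree U u = degree U' u" by (simp only:)
  moreover have "unicyclic_on {1..n} U" "unicyclic_on {1..n} U'"
    using assms unfolding U_set_def n_def by (auto simp: unicyclic_iff_unicyclic_on)
  ultimately have "u_reachable {1..n} U U'" using unicyclic_on_u_reachable by blast
  then show ?thesis unfolding u_reachable_def n_def u_switch_seq_on_iff by blast
qed

end
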